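(* Let $L$ be a computable continuous language, $M$ an $L$-structure and $\mathbf d$ a Turing degree. Then $\operatorname{Th}(M)$ is $\mathbf d$-computable if and only if $\ulcorner \operatorname{Th}(M)\urcorner$ is a $\Pi^{\mathbf d}_1$ subset of $\mathbb N$.
   Context: Restricted $L$-formulae: the smallest set of $L$-formulae containing the atomic formulae and closed under the unary connectives $x\mapsto 0$, $x\mapsto 1$, $x\mapsto x/2$, the binary connective $x\mathbin{\dot-} y:=\max(x-y,0)$, and the quantifiers $\sup_x,\inf_x$. Since $L$ is computable, restricted formulae have Gödel numbers; $\ulcorner\varphi\urcorner$ is the Gödel number of $\varphi$, $\varphi_k$ is the formula with Gödel number $k$, and $\ulcorner\operatorname{Sent}_L\urcorner$ is the (computable) set of Gödel numbers of restricted $L$-sentences. $\ulcorner\operatorname{Th}(M)\urcorner:=\{k\in\ulcorner\operatorname{Sent}_L\urcorner : \varphi_k^M=0\}$. $\operatorname{Th}(M)$ is called $\mathbf d$-computable if there is a $\mathbf d$-algorithm (an algorithm with oracle for a function in $\mathbf d$) which, on input $k\in\ulcorner\operatorname{Sent}_L\urcorner$ and a rational $\epsilon>0$, returns an interval $I$ with rational endpoints such that $|I|<\epsilon$ and $\varphi_k^M\in I$. $\Pi^{\mathbf d}_1$ refers to the relativized arithmetical hierarchy. *)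

theory Defs
  imports Complex_Main "HOL-Library.Nat_Bijection"
begin

datatype prog =
    PZero
  | PSucc
  | PProj nat
  | POrac
  | PComp prog "prog list"
  | PPrim prog prog
  | PMin prog

inductive reval :: "(nat \<Rightarrow> nat) \<Rightarrow> prog \<Rightarrow> nat list \<Rightarrow> nat \<Rightarrow> bool" for f where
  rzero: "reval f PZero xs 0"
| rsucc: "reval f PSucc (x # xs) (Suc x)"
| rproj: "i < length xs \<Longrightarrow> reval f (PProj i) xs (xs ! i)"
| rorac: "reval f POrac (x # xs) (f x)"
| rcomp: "length gs = length ys \<Longrightarrow> (\<forall>i<length gs. reval f (gs ! i) xs (ys ! i))
          \<Longrightarrow> reval f h ys z \<Longrightarrow> reval f (PComp h gs) xs z"
| rprim0: "reval f g xs y \<Longrightarrow> reval f (PPrim g h) (0 # xs) y"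
| rprimS: "reval f (PPrim g h) (n # xs) y \<Longrightarrow> reval f h (n # y # xs) z
          \<Longrightarrow> reval f (PPrim g h) (Suc n # xs) z"
| rmin: "reval f g (n # xs) 0 \<Longrightarrow> (\<forall>m<n. \<exists>y. 0 < y \<and> reval f g (m # xs) y)
          \<Longrightarrow> reval f (PMin g) xs n"

definition comp_in :: "(nat \<Rightarrow> nat) \<Rightarrow> (nat \<Rightarrow> nat) \<Rightarrow> bool" where
  "comp_in f g \<longleftrightarrow> (\<exists>p. \<forall>x. reval f p [x] (g x))"

definition comp_in2 :: "(nat \<Rightarrow> nat) \<Rightarrow> (nat \<Rightarrow> nat \<Rightarrow> nat) \<Rightarrow> bool" where
  "comp_in2 f g \<longleftrightarrow> (\<exists>p. \<forall>x y. reval f p [x, y] (g x y))"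

definition computable :: "(nat \<Rightarrow> nat) \<Rightarrow> bool" where
  "computable g \<longleftrightarrow> comp_in (\<lambda>_. 0) g"

definition computable2 :: "(nat \<Rightarrow> nat \<Rightarrow> nat) \<Rightarrow> bool" where
  "computable2 g \<longleftrightarrow> comp_in2 (\<lambda>_. 0) g"

definition decidable_set :: "nat set \<Rightarrow> bool" where
  "decidable_set A \<longleftrightarrow> computable (\<lambda>x. if x \<in> A then 1 else 0)"

definition turing_reducible :: "(nat \<Rightarrow> nat) \<Rightarrow> (nat \<Rightarrow> nat) \<Rightarrow> bool" where
  "turing_reducible g f \<longleftrightarrow> comp_in f g"

definition turing_degree :: "(nat \<Rightarrow> nat) set \<Rightarrow> bool" where
  "turing_degree D \<longleftrightarrow> (\<exists>f. D = {g. turing_reducible g f \<and> turing_reducible f g})"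

definition Pi1_in :: "(nat \<Rightarrow> nat) set \<Rightarrow> nat set \<Rightarrow> bool" where
  "Pi1_in D A \<longleftrightarrow> (\<exists>f\<in>D. \<exists>R. comp_in2 f (\<lambda>k n. if R k n then 1 else 0)
                      \<and> A = {k. \<forall>n. R k n})"

text \<open>Moduli of uniform continuity are given dyadically:
  for a symbol s and n, if all arguments are within distance < 2^-(mod s n) then the
  values are within distance \<le> 2^-n.\<close>
record clang =
  fsyms :: "nat set"
  rsyms :: "nat set"
  farity :: "nat \<Rightarrow> nat"
  rarity :: "nat \<Rightarrow> nat"
  fmod :: "nat \<Rightarrow> nat \<Rightarrow> nat"
  rmod :: "nat \<Rightarrow> nat \<Rightarrow> nat"

definition computable_lang :: "clang \<Rightarrow> bool" where
  "computable_lang L \<longleftrightarrow> decidable_set (fsyms L) \<and> decidable_set (rsyms L)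
     \<and> computable (farity L) \<and> computable (rarity L)
     \<and> computable2 (fmod L) \<and> computable2 (rmod L)"

record 'a cstruct =
  univ :: "'a set"
  dst :: "'a \<Rightarrow> 'a \<Rightarrow> real"
  fint :: "nat \<Rightarrow> 'a list \<Rightarrow> 'a"
  rint :: "nat \<Rightarrow> 'a list \<Rightarrow> real"

definition is_structure :: "clang \<Rightarrow> 'a cstruct \<Rightarrow> bool" where
  "is_structure L M \<longleftrightarrow>
     univ M \<noteq> {}
   \<and> (\<forall>x\<in>univ M. \<forall>y\<in>univ M. 0 \<le> dst M x y \<and> dst M x y \<le> 1
        \<and> (dst M x y = 0 \<longleftrightarrow> x = y) \<and> dst M x y = dst M y x)
   \<and> (\<forall>x\<in>univ M. \<forall>y\<in>univ M. \<forall>z\<in>univ M. dst M x z \<le> dst M x y + dst M y z)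
   \<and> (\<forall>s::nat\<Rightarrow>'a. (\<forall>n. s n \<in> univ M)
        \<longrightarrow> (\<forall>e>0. \<exists>N. \<forall>m\<ge>N. \<forall>n\<ge>N. dst M (s m) (s n) < e)
        \<longrightarrow> (\<exists>x\<in>univ M. (\<lambda>n. dst M (s n) x) \<longlonglongrightarrow> 0))
   \<and> (\<forall>c\<in>fsyms L. \<forall>xs. set xs \<subseteq> univ M \<and> length xs = farity L c
        \<longrightarrow> fint M c xs \<in> univ M)
   \<and> (\<forall>c\<in>fsyms L. \<forall>n xs ys. set xs \<subseteq> univ M \<and> set ys \<subseteq> univ M
        \<and> length xs = farity L c \<and> length ys = farity L c
        \<and> (\<forall>i<farity L c. dst M (xs ! i) (ys ! i) < (1/2) ^ fmod L c n)
        \<longrightarrow> dst M (fint M c xs) (fint M c ys) \<le> (1/2) ^ n)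
   \<and> (\<forall>r\<in>rsyms L. \<forall>xs. set xs \<subseteq> univ M \<and> length xs = rarity L r
        \<longrightarrow> 0 \<le> rint M r xs \<and> rint M r xs \<le> 1)
   \<and> (\<forall>r\<in>rsyms L. \<forall>n xs ys. set xs \<subseteq> univ M \<and> set ys \<subseteq> univ M
        \<and> length xs = rarity L r \<and> length ys = rarity L r
        \<and> (\<forall>i<rarity L r. dst M (xs ! i) (ys ! i) < (1/2) ^ rmod L r n)
        \<longrightarrow> \<bar>rint M r xs - rint M r ys\<bar> \<le> (1/2) ^ n)"

datatype trm = Var nat | Fn nat "trm list"

datatype fm =
    Rel nat "trm list"
  | Dist trm trm
  | CZero fm
  | COne fm
  | Half fm
  | Monus fm fm
  | Sup nat fm
  | Inf nat fm

fun wf_trm :: "clang \<Rightarrow> trm \<Rightarrow> bool" where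
  "wf_trm L (Var x) = True"
| "wf_trm L (Fn c ts) = (c \<in> fsyms L \<and> length ts = farity L c \<and> (\<forall>t\<in>set ts. wf_trm L t))"

fun fv_trm :: "trm \<Rightarrow> nat set" where
  "fv_trm (Var x) = {x}"
| "fv_trm (Fn c ts) = (\<Union>t\<in>set ts. fv_trm t)"

fun wf_fm :: "clang \<Rightarrow> fm \<Rightarrow> bool" where
  "wf_fm L (Rel r ts) = (r \<in> rsyms L \<and> length ts = rarity L r \<and> (\<forall>t\<in>set ts. wf_trm L t))"
| "wf_fm L (Dist t u) = (wf_trm L t \<and> wf_trm L u)"
| "wf_fm L (CZero p) = wf_fm L p"
| "wf_fm L (COne p) = wf_fm L p"
| "wf_fm L (Half p) = wf_fm L p"
| "wf_fm L (Monus p q) = (wf_fm L p \<and> wf_fm L q)"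
| "wf_fm L (Sup x p) = wf_fm L p"
| "wf_fm L (Inf x p) = wf_fm L p"

fun fv_fm :: "fm \<Rightarrow> nat set" where
  "fv_fm (Rel r ts) = (\<Union>t\<in>set ts. fv_trm t)"
| "fv_fm (Dist t u) = fv_trm t \<union> fv_trm u"
| "fv_fm (CZero p) = fv_fm p"
| "fv_fm (COne p) = fv_fm p"
| "fv_fm (Half p) = fv_fm p"
| "fv_fm (Monus p q) = fv_fm p \<union> fv_fm q"
| "fv_fm (Sup x p) = fv_fm p - {x}"
| "fv_fm (Inf x p) = fv_fm p - {x}"

definition sentence :: "clang \<Rightarrow> fm \<Rightarrow> bool" where
  "sentence L p \<longleftrightarrow> wf_fm L p \<and> fv_fm p = {}"

fun tval :: "'a cstruct \<Rightarrow> (nat \<Rightarrow> 'a) \<Rightarrow> trm \<Rightarrow> 'a" where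
  "tval M s (Var x) = s x"
| "tval M s (Fn c ts) = fint M c (map (tval M s) ts)"

fun fval :: "'a cstruct \<Rightarrow> (nat \<Rightarrow> 'a) \<Rightarrow> fm \<Rightarrow> real" where
  "fval M s (Rel r ts) = rint M r (map (tval M s) ts)"
| "fval M s (Dist t u) = dst M (tval M s t) (tval M s u)"
| "fval M s (CZero p) = 0"
| "fval M s (COne p) = 1"
| "fval M s (Half p) = fval M s p / 2"
| "fval M s (Monus p q) = max (fval M s p - fval M s q) 0"
| "fval M s (Sup x p) = (SUP a\<in>univ M. fval M (s(x := a)) p)"
| "fval M s (Inf x p) = (INF a\<in>univ M. fval M (s(x := a)) p)"

text \<open>Value of a sentence in M (independent of the assignment into the universe).\<close>
definition sval :: "'a cstruct \<Rightarrow> fm \<Rightarrow> real" where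
  "sval M p = fval M (\<lambda>_. SOME a. a \<in> univ M) p"

fun code_trm :: "trm \<Rightarrow> nat" where
  "code_trm (Var x) = prod_encode (0, x)"
| "code_trm (Fn c ts) = prod_encode (1, prod_encode (c, list_encode (map code_trm ts)))"

fun code_fm :: "fm \<Rightarrow> nat" where
  "code_fm (Rel r ts) = prod_encode (0, prod_encode (r, list_encode (map code_trm ts)))"
| "code_fm (Dist t u) = prod_encode (1, prod_encode (code_trm t, code_trm u))"
| "code_fm (CZero p) = prod_encode (2, code_fm p)"
| "code_fm (COne p) = prod_encode (3, code_fm p)"
| "code_fm (Half p) = prod_encode (4, code_fm p)"
| "code_fm (Monus p q) = prod_encode (5, prod_encode (code_fm p, code_fm q))"
| "code_fm (Sup x p) = prod_encode (6, prod_encode (x, code_fm p))"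
| "code_fm (Inf x p) = prod_encode (7, prod_encode (x, code_fm p))"

definition fm_of_code :: "nat \<Rightarrow> fm" where
  "fm_of_code k = inv code_fm k"

definition sent_codes :: "clang \<Rightarrow> nat set" where
  "sent_codes L = code_fm ` {p. sentence L p}"

definition th_codes :: "clang \<Rightarrow> 'a cstruct \<Rightarrow> nat set" where
  "th_codes L M = {k \<in> sent_codes L. sval M (fm_of_code k) = 0}"

definition code_rat :: "rat \<Rightarrow> nat" where
  "code_rat q = (case quotient_of q of (a, b) \<Rightarrow> prod_encode (int_encode a, nat b))"

definition decode_rat :: "nat \<Rightarrow> rat" where
  "decode_rat n = (case prod_decode n of (a, b) \<Rightarrow> Fract (int_decode a) (int b))"

text \<open>Output m codes the closed interval [lo m, hi m].\<close>
definition lo :: "nat \<Rightarrow> real" where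
  "lo m = of_rat (decode_rat (fst (prod_decode m)))"
definition hi :: "nat \<Rightarrow> real" where
  "hi m = of_rat (decode_rat (snd (prod_decode m)))"

definition theory_computable_in :: "(nat \<Rightarrow> nat) set \<Rightarrow> clang \<Rightarrow> 'a cstruct \<Rightarrow> bool" where
  "theory_computable_in D L M \<longleftrightarrow>
     (\<exists>f\<in>D. \<exists>p. \<forall>k\<in>sent_codes L. \<forall>e::rat. 0 < e \<longrightarrow>
        (\<exists>m. reval f p [k, code_rat e] m
             \<and> hi m - lo m < of_rat e
             \<and> lo m \<le> sval M (fm_of_code k) \<and> sval M (fm_of_code k) \<le> hi m))"

end

theory Submission
  imports Defs
begin

text \<open>If an oracle algorithm approximates every sentence value to within \<open>2^-n\<close>, then
  \<open>\<phi>\<^sup>M = 0\<close> iff for every \<open>n\<close> the lower end of the \<open>2^-n\<close>-approximation is \<open>\<le> 0\<close>; as the set of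
  sentence codes is decidable, this is a \<open>\<Pi>\<^sub>1\<close> presentation of the theory relative to the oracle.

  Conversely, let the theory be \<open>{k. \<forall>n. R k n}\<close> with \<open>R\<close> recursive in the oracle. Since a sentence
  belongs to the theory iff its value is \<open>0\<close>, a strict bound \<open>r < \<phi>\<^sup>M\<close> is confirmed by some \<open>n\<close>
  with \<open>\<not> R \<lceil>\<phi> \<minus>\<^sup>. r\<rceil> n\<close>, and \<open>\<phi>\<^sup>M < r\<close> by some \<open>n\<close> with \<open>\<not> R \<lceil>r \<minus>\<^sup>. \<phi>\<rceil> n\<close>. Dyadic
  constants \<open>i/2^j\<close> are expressible by restricted sentences, so an unbounded search finds \<open>i \<le> 2^j\<close>
  with \<open>(i-1)/2^j < \<phi>\<^sup>M < (i+1)/2^j\<close> confirmed (for \<open>i = 0\<close> or \<open>i = 2^j\<close> one bound is trivial as \<open>0 \<le> \<phi>\<^sup>M \<le> 1\<close>),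
  which is an interval of width \<open>2/2^j\<close>.\<close>

section \<open>Functions recursive in an oracle\<close>

definition rec_in :: "(nat \<Rightarrow> nat) \<Rightarrow> nat \<Rightarrow> (nat list \<Rightarrow> nat) \<Rightarrow> bool" where
  "rec_in f n g \<longleftrightarrow> (\<exists>p. \<forall>xs. length xs = n \<longrightarrow> reval f p xs (g xs))"

named_theorems rec_in_intros

lemma rec_in_ext: "rec_in f n g \<Longrightarrow> (\<And>xs. length xs = n \<Longrightarrow> g xs = h xs) \<Longrightarrow> rec_in f n h"
  unfolding rec_in_def by metis

lemma rec_in_zero: "rec_in f n (\<lambda>xs. 0)"
  unfolding rec_in_def by (rule exI[of _ PZero]) (auto intro: rzero)

lemma rec_in_proj[rec_in_intros]: "i < n \<Longrightarrow> rec_in f n (\<lambda>xs. xs ! i)"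
  unfolding rec_in_def by (rule exI[of _ "PProj i"]) (auto intro: rproj)

lemma rec_in_comp_list:
  assumes h: "rec_in f (length Gs) h" and G: "\<forall>G\<in>set Gs. rec_in f n G"
  shows "rec_in f n (\<lambda>xs. h (map (\<lambda>G. G xs) Gs))"
proof -
  from h obtain ph where ph: "\<forall>xs. length xs = length Gs \<longrightarrow> reval f ph xs (h xs)"
    unfolding rec_in_def by blast
  define ps where "ps = map (\<lambda>G. SOME p. \<forall>xs. length xs = n \<longrightarrow> reval f p xs (G xs)) Gs"
  have ps: "\<forall>i<length Gs. \<forall>xs. length xs = n \<longrightarrow> reval f (ps ! i) xs ((Gs ! i) xs)"
  proof (intro allI impI)
    fix i :: nat and xs :: "nat list" assume i: "i < length Gs" and xs: "length xs = n"
    have "rec_in f n (Gs ! i)" using G i by auto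
    then have "\<exists>p. \<forall>xs. length xs = n \<longrightarrow> reval f p xs ((Gs ! i) xs)" unfolding rec_in_def .
    then have "\<forall>xs. length xs = n \<longrightarrow> reval f (ps ! i) xs ((Gs ! i) xs)"
      unfolding ps_def using i by (simp only: nth_map) (rule someI_ex)
    then show "reval f (ps ! i) xs ((Gs ! i) xs)" using xs by blast
  qed
  show ?thesis unfolding rec_in_def
  proof (intro exI allI impI)
    fix xs :: "nat list" assume xs: "length xs = n"
    show "reval f (PComp ph ps) xs (h (map (\<lambda>G. G xs) Gs))"
    proof (rule rcomp[where ys="map (\<lambda>G. G xs) Gs"])
      show "length ps = length (map (\<lambda>G. G xs) Gs)" unfolding ps_def by simp
      show "\<forall>i<length ps. reval f (ps ! i) xs (map (\<lambda>G. G xs) Gs ! i)"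
        using ps xs unfolding ps_def by simp
      show "reval f ph (map (\<lambda>G. G xs) Gs) (h (map (\<lambda>G. G xs) Gs))" using ph by simp
    qed
  qed
qed

lemma rec_in_comp1: "rec_in f 1 (\<lambda>xs. h (xs!0)) \<Longrightarrow> rec_in f n a \<Longrightarrow> rec_in f n (\<lambda>xs. h (a xs))"
  using rec_in_comp_list[of f "[a]" "\<lambda>xs. h (xs!0)" n] by simp

lemma rec_in_comp2: "rec_in f 2 (\<lambda>xs. h (xs!0) (xs!1)) \<Longrightarrow> rec_in f n a \<Longrightarrow> rec_in f n b
   \<Longrightarrow> rec_in f n (\<lambda>xs. h (a xs) (b xs))"
  using rec_in_comp_list[of f "[a,b]" "\<lambda>xs. h (xs!0) (xs!1)" n] by (simp add: numeral_2_eq_2)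

lemma rec_in_Suc1: "rec_in f 1 (\<lambda>xs. Suc (xs!0))"
  unfolding rec_in_def
proof (intro exI[of _ PSucc] allI impI)
  fix xs :: "nat list" assume "length xs = 1"
  then obtain x where "xs = [x]" by (cases xs) auto
  then show "reval f PSucc xs (Suc (xs!0))" by (auto intro: rsucc)
qed

lemma rec_in_Suc[rec_in_intros]: "rec_in f n a \<Longrightarrow> rec_in f n (\<lambda>xs. Suc (a xs))"
  by (rule rec_in_comp1[OF rec_in_Suc1])

lemma rec_in_const[rec_in_intros]: "rec_in f n (\<lambda>xs. c)"
  by (induction c) (auto intro: rec_in_zero rec_in_Suc)

fun prim_rec :: "(nat list \<Rightarrow> nat) \<Rightarrow> (nat \<Rightarrow> nat \<Rightarrow> nat list \<Rightarrow> nat) \<Rightarrow> nat \<Rightarrow> nat list \<Rightarrow> nat" where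
  "prim_rec g h 0 ys = g ys"
| "prim_rec g h (Suc k) ys = h k (prim_rec g h k ys) ys"

lemma rec_in_prim_rec:
  assumes "rec_in f n g" "rec_in f (Suc (Suc n)) (\<lambda>xs. h (xs!0) (xs!1) (drop 2 xs))"
  shows "rec_in f (Suc n) (\<lambda>xs. prim_rec g h (hd xs) (tl xs))"
proof -
  obtain pg where pg: "\<forall>xs. length xs = n \<longrightarrow> reval f pg xs (g xs)" using assms(1) unfolding rec_in_def by blast
  obtain ph where ph: "\<forall>xs. length xs = Suc (Suc n) \<longrightarrow> reval f ph xs (h (xs!0) (xs!1) (drop 2 xs))"
    using assms(2) unfolding rec_in_def by blast
  have *: "length ys = n \<Longrightarrow> reval f (PPrim pg ph) (k # ys) (prim_rec g h k ys)" for k ys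
  proof (induction k)
    case 0 then show ?case using pg by (auto intro: reval.intros)
  next
    case (Suc k)
    have "reval f ph (k # prim_rec g h k ys # ys) (h k (prim_rec g h k ys) ys)"
      using ph[rule_format, of "k # prim_rec g h k ys # ys"] Suc.prems by simp
    then show ?case using Suc by (auto intro: reval.intros)
  qed
  show ?thesis unfolding rec_in_def
  proof (intro exI allI impI)
    fix xs :: "nat list" assume "length xs = Suc n"
    then obtain k ys where "xs = k # ys" "length ys = n" by (cases xs) auto
    then show "reval f (PPrim pg ph) xs (prim_rec g h (hd xs) (tl xs))" using * by simp
  qed
qed

lemma rec_in_min:
  assumes "rec_in f (Suc n) g" "\<And>xs. length xs = n \<Longrightarrow> \<exists>m. g (m # xs) = 0"
  shows "rec_in f n (\<lambda>xs. LEAST m. g (m # xs) = 0)"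
proof -
  obtain pg where pg: "\<forall>xs. length xs = Suc n \<longrightarrow> reval f pg xs (g xs)" using assms(1) unfolding rec_in_def by blast
  show ?thesis unfolding rec_in_def
  proof (intro exI allI impI)
    fix xs :: "nat list" assume xs: "length xs = n"
    let ?m = "LEAST m. g (m # xs) = 0"
    have z: "g (?m # xs) = 0" using assms(2)[OF xs] by (rule LeastI_ex)
    have nz: "\<forall>m<?m. 0 < g (m # xs)" by (auto dest: not_less_Least)
    have e: "\<And>m. reval f pg (m # xs) (g (m # xs))" using pg xs by simp
    show "reval f (PMin pg) xs ?m"
    proof (rule rmin)
      show "reval f pg (?m # xs) 0" using e[of ?m] z by simp
      show "\<forall>m<?m. \<exists>y>0. reval f pg (m # xs) y" using e nz by blast
    qed
  qed
qed

lemma rec_in_run_prog: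
  assumes "rec_in f n a" "rec_in f n b" "\<And>xs. length xs = n \<Longrightarrow> reval f p [a xs, b xs] (F xs)"
  shows "rec_in f n F"
proof -
  obtain pa where pa: "\<forall>xs. length xs = n \<longrightarrow> reval f pa xs (a xs)" using assms(1) unfolding rec_in_def by blast
  obtain pb where pb: "\<forall>xs. length xs = n \<longrightarrow> reval f pb xs (b xs)" using assms(2) unfolding rec_in_def by blast
  show ?thesis unfolding rec_in_def
  proof (intro exI allI impI)
    fix xs :: "nat list" assume xs: "length xs = n"
    show "reval f (PComp p [pa, pb]) xs (F xs)"
    proof (rule rcomp[where ys="[a xs, b xs]"])
      have "\<forall>i<2. reval f ([pa, pb] ! i) xs ([a xs, b xs] ! i)"
        using pa pb xs by (auto simp: less_2_cases_iff)
      then show "\<forall>i<length [pa, pb]. reval f ([pa, pb] ! i) xs ([a xs, b xs] ! i)" by simp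
    qed (use assms(3)[OF xs] in auto)
  qed
qed

lemma rec_in_prim_rec1:
  assumes "F 0 = c" "\<And>k. F (Suc k) = H k (F k)" "rec_in f 2 (\<lambda>xs. H (xs!0) (xs!1))"
  shows "rec_in f 1 (\<lambda>xs. F (xs!0))"
proof -
  have "rec_in f (Suc 0) (\<lambda>xs. prim_rec (\<lambda>_. c) (\<lambda>k r ys. H k r) (hd xs) (tl xs))"
    by (rule rec_in_prim_rec) (use assms(3) in \<open>auto simp: numeral_2_eq_2 intro: rec_in_const\<close>)
  moreover have "prim_rec (\<lambda>_. c) (\<lambda>k r ys. H k r) k ys = F k" for k ys
    by (induction k) (auto simp: assms)
  ultimately show ?thesis
    apply (rule_tac rec_in_ext, simp)
    subgoal for xs by (cases xs) auto
    done
qed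

lemma rec_in_prim_rec2:
  assumes "\<And>y. F 0 y = G y" "\<And>k y. F (Suc k) y = H k (F k y) y"
    "rec_in f 1 (\<lambda>xs. G (xs!0))" "rec_in f 3 (\<lambda>xs. H (xs!0) (xs!1) (xs!2))"
  shows "rec_in f 2 (\<lambda>xs. F (xs!0) (xs!1))"
proof -
  have e3: "Suc (Suc 1) = (3::nat)" by simp
  have h: "rec_in f (Suc (Suc 1)) (\<lambda>xs. (\<lambda>k r ys. H k r (ys!0)) (xs!0) (xs!1) (drop 2 xs))"
    unfolding e3
    by (rule rec_in_ext[OF assms(4)]) (simp add: nth_drop)
  have "rec_in f (Suc 1) (\<lambda>xs. prim_rec (\<lambda>ys. G (ys!0)) (\<lambda>k r ys. H k r (ys!0)) (hd xs) (tl xs))"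
    by (rule rec_in_prim_rec[OF assms(3) h])
  moreover have pr: "prim_rec (\<lambda>ys. G (ys!0)) (\<lambda>k r ys. H k r (ys!0)) k ys = F k (ys!0)" for k ys
    by (induction k) (auto simp: assms)
  ultimately have "rec_in f 2 (\<lambda>xs. prim_rec (\<lambda>ys. G (ys!0)) (\<lambda>k r ys. H k r (ys!0)) (hd xs) (tl xs))"
    by (simp add: numeral_2_eq_2)
  then show ?thesis
  proof (rule rec_in_ext)
    fix xs :: "nat list" assume "length xs = 2"
    then obtain a b where "xs = [a,b]" by (cases xs; cases "tl xs") (auto simp: numeral_2_eq_2)
    then show "prim_rec (\<lambda>ys. G (ys!0)) (\<lambda>k r ys. H k r (ys!0)) (hd xs) (tl xs) = F (xs!0) (xs!1)"
      using pr by simp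
  qed
qed

lemma rec_in_swap: "rec_in f 2 (\<lambda>xs. F (xs!0) (xs!1)) \<Longrightarrow> rec_in f 2 (\<lambda>xs. F (xs!1) (xs!0))"
  by (rule rec_in_comp2) (auto intro: rec_in_proj)

lemma rec_in_add2: "rec_in f 2 (\<lambda>xs. xs!0 + xs!1)"
  by (rule rec_in_prim_rec2[where G="\<lambda>y. y" and H="\<lambda>k r y. Suc r"]) (intro rec_in_intros | simp)+

lemma rec_in_add[rec_in_intros]: "rec_in f n a \<Longrightarrow> rec_in f n b \<Longrightarrow> rec_in f n (\<lambda>xs. a xs + b xs)"
  by (rule rec_in_comp2[OF rec_in_add2])

lemma rec_in_mult2: "rec_in f 2 (\<lambda>xs. xs!0 * xs!1)"
  by (rule rec_in_prim_rec2[where G="\<lambda>y. 0" and H="\<lambda>k r y. r + y"]) (intro rec_in_intros | simp)+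

lemma rec_in_mult[rec_in_intros]: "rec_in f n a \<Longrightarrow> rec_in f n b \<Longrightarrow> rec_in f n (\<lambda>xs. a xs * b xs)"
  by (rule rec_in_comp2[OF rec_in_mult2])

lemma rec_in_pred1: "rec_in f 1 (\<lambda>xs. xs!0 - 1)"
  by (rule rec_in_prim_rec1[where c=0 and H="\<lambda>k r. k"]) (intro rec_in_intros | simp)+

lemma rec_in_pred[rec_in_intros]: "rec_in f n a \<Longrightarrow> rec_in f n (\<lambda>xs. a xs - 1)"
  by (rule rec_in_comp1[OF rec_in_pred1])

lemma rec_in_minus2: "rec_in f 2 (\<lambda>xs. xs!0 - xs!1)"
proof -
  have "rec_in f 2 (\<lambda>xs. (\<lambda>y x. x - y) (xs!0) (xs!1))"
    by (rule rec_in_prim_rec2[where G="\<lambda>y. y" and H="\<lambda>k r y. r - 1"]) (intro rec_in_intros | simp)+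
  from rec_in_swap[OF this] show ?thesis by simp
qed

lemma rec_in_minus[rec_in_intros]: "rec_in f n a \<Longrightarrow> rec_in f n b \<Longrightarrow> rec_in f n (\<lambda>xs. a xs - b xs)"
  by (rule rec_in_comp2[OF rec_in_minus2])

lemma rec_in_power2: "rec_in f 2 (\<lambda>xs. xs!0 ^ xs!1)"
proof -
  have "rec_in f 2 (\<lambda>xs. (\<lambda>y x. x ^ y) (xs!0) (xs!1))"
    by (rule rec_in_prim_rec2[where G="\<lambda>y. 1" and H="\<lambda>k r y. r * y"]) (intro rec_in_intros | simp)+
  from rec_in_swap[OF this] show ?thesis by simp
qed

lemma rec_in_power[rec_in_intros]: "rec_in f n a \<Longrightarrow> rec_in f n b \<Longrightarrow> rec_in f n (\<lambda>xs. a xs ^ b xs)"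
  by (rule rec_in_comp2[OF rec_in_power2])

definition ind :: "bool \<Rightarrow> nat" where "ind P = (if P then 1 else 0)"

lemma ind_simps[simp]: "ind True = 1" "ind False = 0" "ind P \<le> 1" "ind P = 0 \<longleftrightarrow> \<not> P" "ind P = 1 \<longleftrightarrow> P"
  "0 < ind P \<longleftrightarrow> P"
  by (auto simp: ind_def)

lemma rec_in_ind_le[rec_in_intros]: "rec_in f n a \<Longrightarrow> rec_in f n b \<Longrightarrow> rec_in f n (\<lambda>xs. ind (a xs \<le> b xs))"
  by (rule rec_in_ext[where g="\<lambda>xs. 1 - (a xs - b xs)"]) ((intro rec_in_intros | simp)+, simp add: ind_def)

lemma rec_in_ind_less[rec_in_intros]: "rec_in f n a \<Longrightarrow> rec_in f n b \<Longrightarrow> rec_in f n (\<lambda>xs. ind (a xs < b xs))"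
  by (rule rec_in_ext[where g="\<lambda>xs. ind (Suc (a xs) \<le> b xs)"]) ((intro rec_in_intros | simp)+, simp add: ind_def)

lemma rec_in_ind_conj[rec_in_intros]: "rec_in f n (\<lambda>xs. ind (P xs)) \<Longrightarrow> rec_in f n (\<lambda>xs. ind (Q xs)) \<Longrightarrow> rec_in f n (\<lambda>xs. ind (P xs \<and> Q xs))"
  by (rule rec_in_ext[where g="\<lambda>xs. ind (P xs) * ind (Q xs)"]) ((intro rec_in_intros | simp)+, simp add: ind_def)

lemma rec_in_ind_not[rec_in_intros]: "rec_in f n (\<lambda>xs. ind (P xs)) \<Longrightarrow> rec_in f n (\<lambda>xs. ind (\<not> P xs))"
  by (rule rec_in_ext[where g="\<lambda>xs. 1 - ind (P xs)"]) ((intro rec_in_intros | simp)+, simp add: ind_def)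

lemma rec_in_ind_disj[rec_in_intros]: "rec_in f n (\<lambda>xs. ind (P xs)) \<Longrightarrow> rec_in f n (\<lambda>xs. ind (Q xs)) \<Longrightarrow> rec_in f n (\<lambda>xs. ind (P xs \<or> Q xs))"
  by (rule rec_in_ext[where g="\<lambda>xs. ind (\<not> (\<not> P xs \<and> \<not> Q xs))"]) (intro rec_in_ind_not rec_in_ind_conj, simp_all)

lemma rec_in_ind_eq[rec_in_intros]: "rec_in f n a \<Longrightarrow> rec_in f n b \<Longrightarrow> rec_in f n (\<lambda>xs. ind (a xs = b xs))"
  by (rule rec_in_ext[where g="\<lambda>xs. ind (a xs \<le> b xs \<and> b xs \<le> a xs)"]) ((intro rec_in_intros | simp)+, simp add: ind_def)

lemma rec_in_ind_even[rec_in_intros]: "rec_in f n a \<Longrightarrow> rec_in f n (\<lambda>xs. ind (even (a xs)))"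
proof -
  have "rec_in f 1 (\<lambda>xs. ind (even (xs!0)))"
    by (rule rec_in_prim_rec1[where c=1 and H="\<lambda>k r. 1 - r"], simp, simp add: ind_def)
       (intro rec_in_minus rec_in_const rec_in_proj, simp)
  then show "rec_in f n a \<Longrightarrow> rec_in f n (\<lambda>xs. ind (even (a xs)))" by (rule rec_in_comp1)
qed

lemma rec_in_if[rec_in_intros]: "rec_in f n (\<lambda>xs. ind (P xs)) \<Longrightarrow> rec_in f n b \<Longrightarrow> rec_in f n c
   \<Longrightarrow> rec_in f n (\<lambda>xs. if P xs then b xs else c xs)"
  by (rule rec_in_ext[where g="\<lambda>xs. ind (P xs) * b xs + (1 - ind (P xs)) * c xs"]) (intro rec_in_intros | simp)+

lemma rec_in_Least:
  assumes "rec_in f (Suc n) (\<lambda>xs. ind (\<not> P (hd xs) (tl xs)))" "\<And>xs. length xs = n \<Longrightarrow> \<exists>m. P m xs"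
  shows "rec_in f n (\<lambda>xs. LEAST m. P m xs)"
  using rec_in_min[OF assms(1)] assms(2) by simp

lemma div_least: "(x::nat) div y = (LEAST q. y = 0 \<or> x < Suc q * y)"
proof (cases "y = 0")
  case False
  show ?thesis
  proof (rule Least_equality[symmetric])
    show "y = 0 \<or> x < Suc (x div y) * y" using False
      by (metis add.commute div_mult_mod_eq mod_less_divisor mult_Suc nat_add_left_cancel_less neq0_conv)
    fix q assume "y = 0 \<or> x < Suc q * y"
    then have "x < Suc q * y" using False by simp
    then show "x div y \<le> q"
      by (metis less_Suc_eq_le less_mult_imp_div_less)
  qed
qed simp

lemma rec_in_div2: "rec_in f 2 (\<lambda>xs. xs!0 div xs!1)"
proof -
  have "rec_in f 2 (\<lambda>xs. LEAST q. xs!1 = 0 \<or> xs!0 < Suc q * xs!1)"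
  proof (rule rec_in_Least[where P="\<lambda>q xs. xs!1 = 0 \<or> xs!0 < Suc q * xs!1"])
    have "rec_in f 3 (\<lambda>xs. ind (\<not> (xs ! 2 = 0 \<or> xs ! 1 < Suc (xs!0) * xs ! 2)))"
      by (intro rec_in_intros; simp)
    then show "rec_in f (Suc 2) (\<lambda>xs. ind (\<not> (\<lambda>q xs. xs!1 = 0 \<or> xs!0 < Suc q * xs!1) (hd xs) (tl xs)))"
      apply (rule_tac rec_in_ext, simp)
      subgoal for xs by (cases xs) auto
      done
    fix xs :: "nat list"
    show "\<exists>m. (\<lambda>q xs. xs!1 = 0 \<or> xs!0 < Suc q * xs!1) m xs"
      by (rule exI[of _ "xs!0"]) (cases "xs!1"; simp)
  qed
  then show ?thesis by (simp add: div_least)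
qed

lemma rec_in_div[rec_in_intros]: "rec_in f n a \<Longrightarrow> rec_in f n b \<Longrightarrow> rec_in f n (\<lambda>xs. a xs div b xs)"
  by (rule rec_in_comp2[OF rec_in_div2])

lemma rec_in_mod[rec_in_intros]: "rec_in f n a \<Longrightarrow> rec_in f n b \<Longrightarrow> rec_in f n (\<lambda>xs. a xs mod b xs)"
  by (rule rec_in_ext[where g="\<lambda>xs. a xs - b xs * (a xs div b xs)"]) ((intro rec_in_intros | simp)+, simp add: minus_mult_div_eq_mod)

fun zero_oracle_prog :: "prog \<Rightarrow> prog" where
  "zero_oracle_prog POrac = PZero"
| "zero_oracle_prog (PComp h gs) = PComp (zero_oracle_prog h) (map zero_oracle_prog gs)"
| "zero_oracle_prog (PPrim g h) = PPrim (zero_oracle_prog g) (zero_oracle_prog h)"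
| "zero_oracle_prog (PMin g) = PMin (zero_oracle_prog g)"
| "zero_oracle_prog p = p"

lemma reval_zero_oracle_prog: "reval (\<lambda>_. 0) p xs y \<Longrightarrow> reval f (zero_oracle_prog p) xs y"
proof (induction rule: reval.induct)
  case (rcomp gs ys xs h z)
  then show ?case by (auto intro!: reval.rcomp)
qed (auto intro: reval.intros)

lemma rec_in_from_comp_in: "comp_in (\<lambda>_. 0) g \<Longrightarrow> rec_in f 1 (\<lambda>xs. g (xs!0))"
  unfolding comp_in_def rec_in_def
proof (elim exE, intro exI allI impI)
  fix p and xs :: "nat list" assume p: "\<forall>x. reval (\<lambda>_. 0) p [x] (g x)" and "length xs = 1"
  then obtain x where "xs = [x]" by (cases xs) auto
  then show "reval f (zero_oracle_prog p) xs (g (xs!0))" using p reval_zero_oracle_prog by auto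
qed

lemma rec_in_from_computable: "computable g \<Longrightarrow> rec_in f n a \<Longrightarrow> rec_in f n (\<lambda>xs. g (a xs))"
  unfolding computable_def by (rule rec_in_comp1[OF rec_in_from_comp_in])

lemma rec_in_from_decidable: "decidable_set A \<Longrightarrow> rec_in f n a \<Longrightarrow> rec_in f n (\<lambda>xs. ind (a xs \<in> A))"
  unfolding decidable_set_def ind_def by (rule rec_in_from_computable)

lemma rec_in_Least1:
  assumes "rec_in f 2 (\<lambda>xs. ind (\<not> P (xs!0) (xs!1)))" "\<And>x. \<exists>m. P m x"
  shows "rec_in f 1 (\<lambda>xs. LEAST m. P m (xs!0))"
proof (rule rec_in_Least[where P="\<lambda>m xs. P m (xs!0)"])
  have e: "Suc 1 = (2::nat)" by simp
  show "rec_in f (Suc 1) (\<lambda>xs. ind (\<not> (\<lambda>m xs. P m (xs!0)) (hd xs) (tl xs)))"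
    unfolding e
  proof (rule rec_in_ext[OF assms(1)])
    fix xs :: "nat list" assume "length xs = 2"
    then obtain a b where "xs = [a,b]" by (cases xs; cases "tl xs") (auto simp: numeral_2_eq_2)
    then show "ind (\<not> P (xs!0) (xs!1)) = ind (\<not> (\<lambda>m xs. P m (xs!0)) (hd xs) (tl xs))" by simp
  qed
qed (use assms(2) in auto)

lemma rec_in_to_comp_in2: "rec_in f 2 (\<lambda>xs. g (xs!0) (xs!1)) \<Longrightarrow> comp_in2 f g"
  unfolding rec_in_def comp_in2_def
proof (elim exE, intro exI allI)
  fix p x y assume "\<forall>xs. length xs = 2 \<longrightarrow> reval f p xs (g (xs ! 0) (xs ! 1))"
  then show "reval f p [x, y] (g x y)" by (metis length_Cons list.size(3) nth_Cons_0 nth_Cons_Suc numeral_2_eq_2 One_nat_def)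
qed

lemma rec_in_of_comp_in2: "comp_in2 f g \<Longrightarrow> rec_in f 2 (\<lambda>xs. g (xs!0) (xs!1))"
  unfolding comp_in2_def rec_in_def
proof (elim exE, intro exI allI impI)
  fix p and xs :: "nat list" assume p: "\<forall>x y. reval f p [x, y] (g x y)" and "length xs = 2"
  then obtain x y where "xs = [x, y]" by (cases xs; cases "tl xs") (auto simp: numeral_2_eq_2)
  then show "reval f p xs (g (xs!0) (xs!1))" using p by auto
qed

lemma rec_in_Least2:
  assumes "rec_in f 3 (\<lambda>xs. ind (\<not> P (xs!0) (xs!1) (xs!2)))" "\<And>a b. \<exists>m. P m a b"
  shows "rec_in f 2 (\<lambda>xs. LEAST m. P m (xs!0) (xs!1))"
proof (rule rec_in_Least[where P="\<lambda>m xs. P m (xs!0) (xs!1)"])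
  have e: "Suc 2 = (3::nat)" by simp
  show "rec_in f (Suc 2) (\<lambda>xs. ind (\<not> (\<lambda>m xs. P m (xs!0) (xs!1)) (hd xs) (tl xs)))"
    unfolding e
  proof (rule rec_in_ext[OF assms(1)])
    fix xs :: "nat list" assume "length xs = 3"
    then obtain a b c where "xs = [a,b,c]" by (cases xs; cases "tl xs"; cases "tl (tl xs)") (auto simp: numeral_3_eq_3)
    then show "ind (\<not> P (xs!0) (xs!1) (xs!2)) = ind (\<not> (\<lambda>m xs. P m (xs!0) (xs!1)) (hd xs) (tl xs))" by simp
  qed
qed (use assms(2) in auto)

lemma rec_in_triangle[rec_in_intros]: "rec_in f n a \<Longrightarrow> rec_in f n (\<lambda>xs. triangle (a xs))"
proof -
  have "rec_in f 1 (\<lambda>xs. triangle (xs!0))"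
    by (rule rec_in_prim_rec1[where c=0 and H="\<lambda>k r. r + Suc k"]) (intro rec_in_intros | simp)+
  then show "rec_in f n a \<Longrightarrow> rec_in f n (\<lambda>xs. triangle (a xs))" by (rule rec_in_comp1)
qed

section \<open>Cantor pairing and codes of lists\<close>

definition cpair :: "nat \<Rightarrow> nat \<Rightarrow> nat" where "cpair a b = prod_encode (a, b)"
definition cfst :: "nat \<Rightarrow> nat" where "cfst z = fst (prod_decode z)"
definition csnd :: "nat \<Rightarrow> nat" where "csnd z = snd (prod_decode z)"

lemma cfst_csnd_cpair[simp]: "cfst (cpair a b) = a" "csnd (cpair a b) = b"
  by (auto simp: cpair_def cfst_def csnd_def)

lemma cpair_cfst_csnd[simp]: "cpair (cfst z) (csnd z) = z"
  by (simp add: cpair_def cfst_def csnd_def)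

lemma rec_in_cpair[rec_in_intros]: "rec_in f n a \<Longrightarrow> rec_in f n b \<Longrightarrow> rec_in f n (\<lambda>xs. cpair (a xs) (b xs))"
  by (rule rec_in_ext[where g="\<lambda>xs. triangle (a xs + b xs) + a xs"]) ((intro rec_in_intros | simp)+, simp add: cpair_def prod_encode_def)

lemma triangle_mono: "a \<le> b \<Longrightarrow> triangle a \<le> triangle b"
  by (induction b) (auto simp: le_Suc_eq)

definition cdiag :: "nat \<Rightarrow> nat" where "cdiag z = (LEAST s. z < triangle (Suc s))"

lemma cdiag_eq: "cdiag z = cfst z + csnd z"
proof -
  obtain m n where mn: "prod_decode z = (m, n)" by (cases "prod_decode z")
  then have z: "z = triangle (m + n) + m"
    using prod_decode_inverse[of z] by (simp add: prod_encode_def)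
  have "cdiag z = m + n" unfolding cdiag_def
  proof (rule Least_equality)
    show "z < triangle (Suc (m + n))" using z by simp
    fix s assume "z < triangle (Suc s)"
    then show "m + n \<le> s" using z triangle_mono[of "Suc s" "m+n"] by (cases "Suc s \<le> m + n") auto
  qed
  then show ?thesis using mn by (simp add: cfst_def csnd_def)
qed

lemma rec_in_cdiag[rec_in_intros]: "rec_in f n a \<Longrightarrow> rec_in f n (\<lambda>xs. cdiag (a xs))"
proof -
  have "rec_in f 1 (\<lambda>xs. LEAST s. xs!0 < triangle (Suc s))"
  proof (rule rec_in_Least1[where P="\<lambda>s x. x < triangle (Suc s)"])
    show "rec_in f 2 (\<lambda>xs. ind (\<not> xs!1 < triangle (Suc (xs!0))))"
      by (intro rec_in_intros; simp)
    fix x :: nat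
    have tr: "x < triangle (Suc x)" for x by (induction x) auto
    then show "\<exists>m. x < triangle (Suc m)" by blast
  qed
  then have "rec_in f 1 (\<lambda>xs. cdiag (xs!0))" by (simp add: cdiag_def)
  then show "rec_in f n a \<Longrightarrow> rec_in f n (\<lambda>xs. cdiag (a xs))" by (rule rec_in_comp1)
qed

lemma cfst_via_cdiag: "cfst z = z - triangle (cdiag z)"
proof -
  obtain m n where mn: "prod_decode z = (m, n)" by (cases "prod_decode z")
  then have z: "z = triangle (m + n) + m"
    using prod_decode_inverse[of z] by (simp add: prod_encode_def)
  then show ?thesis using mn by (simp add: cdiag_eq cfst_def csnd_def)
qed

lemma rec_in_cfst[rec_in_intros]: "rec_in f n a \<Longrightarrow> rec_in f n (\<lambda>xs. cfst (a xs))"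
  by (rule rec_in_ext[where g="\<lambda>xs. a xs - triangle (cdiag (a xs))"]) ((intro rec_in_intros | simp)+, simp add: cfst_via_cdiag)

lemma rec_in_csnd[rec_in_intros]: "rec_in f n a \<Longrightarrow> rec_in f n (\<lambda>xs. csnd (a xs))"
  by (rule rec_in_ext[where g="\<lambda>xs. cdiag (a xs) - cfst (a xs)"]) ((intro rec_in_intros | simp)+, simp add: cdiag_eq)

lemma cpair_ge_fst: "a \<le> cpair a b" and cpair_ge_snd: "b \<le> cpair a b"
  by (auto simp: cpair_def le_prod_encode_1 le_prod_encode_2)

lemma cpair_greater_snd: "0 < a \<Longrightarrow> b < cpair a b"
proof -
  assume "0 < a"
  have "b \<le> triangle (a + b)" by (induction b) auto
  then show ?thesis using \<open>0 < a\<close> unfolding cpair_def prod_encode_def by simp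
qed

lemma cfst_csnd_le: "cfst z \<le> z" "csnd z \<le> z"
  using cpair_ge_fst[of "cfst z" "csnd z"] cpair_ge_snd[of "csnd z" "cfst z"] by simp_all

definition code_tl :: "nat \<Rightarrow> nat" where "code_tl l = (if l = 0 then 0 else csnd (l - 1))"
definition code_hd :: "nat \<Rightarrow> nat" where "code_hd l = cfst (l - 1)"

lemma list_decode_csel: "l \<noteq> 0 \<Longrightarrow> list_decode l = code_hd l # list_decode (code_tl l)"
  by (cases l) (auto simp: code_hd_def code_tl_def cfst_def csnd_def split: prod.split)

lemma rec_in_code_tl[rec_in_intros]: "rec_in f n a \<Longrightarrow> rec_in f n (\<lambda>xs. code_tl (a xs))"
  unfolding code_tl_def by (intro rec_in_intros | simp)+

lemma rec_in_code_hd[rec_in_intros]: "rec_in f n a \<Longrightarrow> rec_in f n (\<lambda>xs. code_hd (a xs))"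
  unfolding code_hd_def by (intro rec_in_intros | simp)+

definition code_drop :: "nat \<Rightarrow> nat \<Rightarrow> nat" where "code_drop k l = (code_tl ^^ k) l"

lemma code_drop_decode: "list_decode (code_drop k l) = drop k (list_decode l)"
proof (induction k)
  case 0 then show ?case by (simp add: code_drop_def)
next
  case (Suc k)
  have "code_drop (Suc k) l = code_tl (code_drop k l)" by (simp add: code_drop_def)
  moreover have "list_decode (code_tl m) = tl (list_decode m)" for m
    by (cases "m = 0") (auto simp: list_decode_csel code_tl_def)
  ultimately show ?case using Suc by (simp add: drop_Suc tl_drop)
qed

lemma list_decode_0_iff: "list_decode l = [] \<longleftrightarrow> l = 0"
  by (metis list_decode.simps(1) list_decode_inverse list_encode.simps(1))

lemma rec_in_code_drop[rec_in_intros]: "rec_in f n a \<Longrightarrow> rec_in f n b \<Longrightarrow> rec_in f n (\<lambda>xs. code_drop (a xs) (b xs))"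
proof -
  have "rec_in f 2 (\<lambda>xs. code_drop (xs!0) (xs!1))"
    by (rule rec_in_prim_rec2[where G="\<lambda>y. y" and H="\<lambda>k r y. code_tl r"]) (simp add: code_drop_def, simp add: code_drop_def, (intro rec_in_intros | simp)+)
  then show "rec_in f n a \<Longrightarrow> rec_in f n b \<Longrightarrow> rec_in f n (\<lambda>xs. code_drop (a xs) (b xs))" by (rule rec_in_comp2)
qed

definition code_length :: "nat \<Rightarrow> nat" where "code_length l = length (list_decode l)"

lemma code_length_least: "code_length l = (LEAST k. code_drop k l = 0)"
proof (rule Least_equality[symmetric])
  show "code_drop (code_length l) l = 0" using code_drop_decode[of "code_length l" l] by (simp add: code_length_def list_decode_0_iff[symmetric])
  fix k assume "code_drop k l = 0"
  then show "code_length l \<le> k" using code_drop_decode[of k l] by (simp add: code_length_def)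
qed

lemma rec_in_code_length[rec_in_intros]: "rec_in f n a \<Longrightarrow> rec_in f n (\<lambda>xs. code_length (a xs))"
proof -
  have "rec_in f 1 (\<lambda>xs. LEAST k. code_drop k (xs!0) = 0)"
  proof (rule rec_in_Least1[where P="\<lambda>k x. code_drop k x = 0"])
    show "rec_in f 2 (\<lambda>xs. ind (\<not> code_drop (xs!0) (xs!1) = 0))"
      by (intro rec_in_intros; simp)
    fix x :: nat
    have "code_drop (code_length x) x = 0" using code_drop_decode[of "code_length x" x] by (simp add: code_length_def list_decode_0_iff[symmetric])
    then show "\<exists>m. code_drop m x = 0" by blast
  qed
  then have "rec_in f 1 (\<lambda>xs. code_length (xs!0))" by (simp add: code_length_least)
  then show "rec_in f n a \<Longrightarrow> rec_in f n (\<lambda>xs. code_length (a xs))" by (rule rec_in_comp1)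
qed

lemma rec_in_ball:
  assumes "rec_in f 2 (\<lambda>xs. ind (P (xs!0) (xs!1)))"
  shows "rec_in f 1 (\<lambda>xs. ind (\<forall>x\<le>xs!0. P x (xs!0)))"
proof -
  define A where "A k c = ind (\<forall>x\<le>k. P x c)" for k c
  have "rec_in f 2 (\<lambda>xs. A (xs!0) (xs!1))"
  proof (rule rec_in_prim_rec2[where G="\<lambda>c. ind (P 0 c)" and H="\<lambda>k r c. r * ind (P (Suc k) c)"])
    show "A 0 y = ind (P 0 y)" for y by (simp add: A_def)
    show "A (Suc k) y = A k y * ind (P (Suc k) y)" for k y
      by (auto simp: A_def ind_def le_Suc_eq)
    show "rec_in f 1 (\<lambda>xs. ind (P 0 (xs!0)))"
      by (rule rec_in_comp2[OF assms]) (intro rec_in_intros | simp)+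
    show "rec_in f 3 (\<lambda>xs. xs!1 * ind (P (Suc (xs!0)) (xs!2)))"
      by (intro rec_in_mult rec_in_proj rec_in_comp2[OF assms] rec_in_Suc; simp)
  qed
  then have "rec_in f 1 (\<lambda>xs. A (xs!0) (xs!0))" by (rule rec_in_comp2) (intro rec_in_intros; simp)+
  then show ?thesis by (simp add: A_def)
qed

section \<open>Decidability of the set of sentence codes\<close>

text \<open>The profile of a code \<open>i\<close> (for a fixed variable \<open>x\<close>) consists of six bits: \<open>i\<close> codes a
  well-formed term, a well-formed term without \<open>x\<close>, a list of such terms, a list of such terms
  without \<open>x\<close>, a well-formed formula, a well-formed formula without free \<open>x\<close>. Each bit of \<open>i\<close>
  depends only on bits of smaller codes, so the profiles of all codes below \<open>z\<close>, packed six bits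
  per code into \<open>profile_hist L x z\<close>, are computed by course-of-values recursion.\<close>

definition hist_bit :: "nat \<Rightarrow> nat \<Rightarrow> nat \<Rightarrow> nat" where "hist_bit H i b = H div 2^(6*i+b) mod 2"

lemma rec_in_hist_bit[rec_in_intros]: "rec_in f n a \<Longrightarrow> rec_in f n b \<Longrightarrow> rec_in f n c \<Longrightarrow> rec_in f n (\<lambda>xs. hist_bit (a xs) (b xs) (c xs))"
  unfolding hist_bit_def by (intro rec_in_intros | simp)+

definition trm_wf_step :: "clang \<Rightarrow> nat \<Rightarrow> nat \<Rightarrow> nat" where
  "trm_wf_step L c H = (if cfst c = 0 then 1 else if cfst c = 1 then
      ind (cfst (csnd c) \<in> fsyms L \<and> code_length (csnd (csnd c)) = farity L (cfst (csnd c)) \<and> hist_bit H (csnd (csnd c)) 2 = 1)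
    else 0)"
definition trm_fresh_step :: "clang \<Rightarrow> nat \<Rightarrow> nat \<Rightarrow> nat \<Rightarrow> nat" where
  "trm_fresh_step L x c H = (if cfst c = 0 then ind (csnd c \<noteq> x) else if cfst c = 1 then
      ind (cfst (csnd c) \<in> fsyms L \<and> code_length (csnd (csnd c)) = farity L (cfst (csnd c)) \<and> hist_bit H (csnd (csnd c)) 3 = 1)
    else 0)"
definition trms_wf_step :: "nat \<Rightarrow> nat \<Rightarrow> nat" where
  "trms_wf_step c H = (if c = 0 then 1 else ind (hist_bit H (code_hd c) 0 = 1 \<and> hist_bit H (code_tl c) 2 = 1))"
definition trms_fresh_step :: "nat \<Rightarrow> nat \<Rightarrow> nat" where
  "trms_fresh_step c H = (if c = 0 then 1 else ind (hist_bit H (code_hd c) 1 = 1 \<and> hist_bit H (code_tl c) 3 = 1))"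
definition trm_profile_step :: "clang \<Rightarrow> nat \<Rightarrow> nat \<Rightarrow> nat \<Rightarrow> nat" where
  "trm_profile_step L x c H = trm_wf_step L c H + 2 * trm_fresh_step L x c H + 4 * trms_wf_step c H + 8 * trms_fresh_step c H"

definition fm_wf_step :: "clang \<Rightarrow> nat \<Rightarrow> nat \<Rightarrow> nat" where
  "fm_wf_step L c H = (if cfst c = 0 then
      ind (cfst (csnd c) \<in> rsyms L \<and> code_length (csnd (csnd c)) = rarity L (cfst (csnd c)) \<and> hist_bit H (csnd (csnd c)) 2 = 1)
    else if cfst c = 1 then ind (hist_bit H (cfst (csnd c)) 0 = 1 \<and> hist_bit H (csnd (csnd c)) 0 = 1)
    else if cfst c = 2 \<or> cfst c = 3 \<or> cfst c = 4 then hist_bit H (csnd c) 4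
    else if cfst c = 5 then ind (hist_bit H (cfst (csnd c)) 4 = 1 \<and> hist_bit H (csnd (csnd c)) 4 = 1)
    else if cfst c = 6 \<or> cfst c = 7 then hist_bit H (csnd (csnd c)) 4
    else 0)"
definition fm_fresh_step :: "clang \<Rightarrow> nat \<Rightarrow> nat \<Rightarrow> nat \<Rightarrow> nat" where
  "fm_fresh_step L x c H = (if cfst c = 0 then
      ind (cfst (csnd c) \<in> rsyms L \<and> code_length (csnd (csnd c)) = rarity L (cfst (csnd c)) \<and> hist_bit H (csnd (csnd c)) 3 = 1)
    else if cfst c = 1 then ind (hist_bit H (cfst (csnd c)) 1 = 1 \<and> hist_bit H (csnd (csnd c)) 1 = 1)
    else if cfst c = 2 \<or> cfst c = 3 \<or> cfst c = 4 then hist_bit H (csnd c) 5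
    else if cfst c = 5 then ind (hist_bit H (cfst (csnd c)) 5 = 1 \<and> hist_bit H (csnd (csnd c)) 5 = 1)
    else if cfst c = 6 \<or> cfst c = 7 then ind (hist_bit H (csnd (csnd c)) 4 = 1 \<and> (cfst (csnd c) = x \<or> hist_bit H (csnd (csnd c)) 5 = 1))
    else 0)"

definition profile_step :: "clang \<Rightarrow> nat \<Rightarrow> nat \<Rightarrow> nat \<Rightarrow> nat" where
  "profile_step L x c H = trm_profile_step L x c H + 16 * fm_wf_step L c (H + 2^(6*c) * trm_profile_step L x c H)
      + 32 * fm_fresh_step L x c (H + 2^(6*c) * trm_profile_step L x c H)"

fun profile_hist :: "clang \<Rightarrow> nat \<Rightarrow> nat \<Rightarrow> nat" where
  "profile_hist L x 0 = 0"
| "profile_hist L x (Suc z) = profile_hist L x z + 2^(6*z) * profile_step L x z (profile_hist L x z)"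

text \<open>The bound \<open>x \<le> c\<close> suffices since variables of a formula are bounded by its code.\<close>
definition is_sent_code :: "clang \<Rightarrow> nat \<Rightarrow> bool" where
  "is_sent_code L c \<longleftrightarrow> hist_bit (profile_hist L 0 (Suc c)) c 4 = 1 \<and> (\<forall>x\<le>c. hist_bit (profile_hist L x (Suc c)) c 5 = 1)"

context
  fixes L :: clang and f :: "nat \<Rightarrow> nat"
  assumes cl: "computable_lang L"
begin

lemma rec_in_fsyms[rec_in_intros]: "rec_in f n a \<Longrightarrow> rec_in f n (\<lambda>xs. ind (a xs \<in> fsyms L))"
  using cl rec_in_from_decidable unfolding computable_lang_def by blast
lemma rec_in_rsyms[rec_in_intros]: "rec_in f n a \<Longrightarrow> rec_in f n (\<lambda>xs. ind (a xs \<in> rsyms L))"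
  using cl rec_in_from_decidable unfolding computable_lang_def by blast
lemma rec_in_farity[rec_in_intros]: "rec_in f n a \<Longrightarrow> rec_in f n (\<lambda>xs. farity L (a xs))"
  using cl rec_in_from_computable unfolding computable_lang_def by blast
lemma rec_in_rarity[rec_in_intros]: "rec_in f n a \<Longrightarrow> rec_in f n (\<lambda>xs. rarity L (a xs))"
  using cl rec_in_from_computable unfolding computable_lang_def by blast

lemma rec_in_trm_profile_step[rec_in_intros]: "rec_in f n a \<Longrightarrow> rec_in f n b \<Longrightarrow> rec_in f n c \<Longrightarrow> rec_in f n (\<lambda>xs. trm_profile_step L (a xs) (b xs) (c xs))"
  unfolding trm_profile_step_def trm_wf_step_def trm_fresh_step_def trms_wf_step_def trms_fresh_step_def by (intro rec_in_intros | simp)+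

lemma rec_in_profile_step[rec_in_intros]: "rec_in f n a \<Longrightarrow> rec_in f n b \<Longrightarrow> rec_in f n c \<Longrightarrow> rec_in f n (\<lambda>xs. profile_step L (a xs) (b xs) (c xs))"
  unfolding profile_step_def fm_wf_step_def fm_fresh_step_def by (intro rec_in_intros | simp)+

lemma rec_in_profile_hist[rec_in_intros]: "rec_in f n a \<Longrightarrow> rec_in f n b \<Longrightarrow> rec_in f n (\<lambda>xs. profile_hist L (a xs) (b xs))"
proof -
  have "rec_in f 2 (\<lambda>xs. (\<lambda>z x. profile_hist L x z) (xs!0) (xs!1))"
    by (rule rec_in_prim_rec2[where G="\<lambda>x. 0" and H="\<lambda>k r x. r + 2^(6*k) * profile_step L x k r"]) (simp, simp, (intro rec_in_intros | simp)+)
  from rec_in_swap[OF this] have "rec_in f 2 (\<lambda>xs. profile_hist L (xs!0) (xs!1))" by simp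
  then show "rec_in f n a \<Longrightarrow> rec_in f n b \<Longrightarrow> rec_in f n (\<lambda>xs. profile_hist L (a xs) (b xs))" by (rule rec_in_comp2)
qed

lemma rec_in_is_sent_code: "rec_in f n a \<Longrightarrow> rec_in f n (\<lambda>xs. ind (is_sent_code L (a xs)))"
proof -
  have b: "rec_in f 1 (\<lambda>xs. ind (\<forall>x\<le>xs!0. (\<lambda>x c. hist_bit (profile_hist L x (Suc c)) c 5 = 1) x (xs!0)))"
    by (rule rec_in_ball) (intro rec_in_intros | simp)+
  have "rec_in f 1 (\<lambda>xs. ind (is_sent_code L (xs!0)))"
    unfolding is_sent_code_def by (intro rec_in_ind_conj b[simplified] rec_in_intros | simp)+
  then show "rec_in f n a \<Longrightarrow> rec_in f n (\<lambda>xs. ind (is_sent_code L (a xs)))" by (rule rec_in_comp1)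
qed

end

lemma code_trm_cpair[simp]: "code_trm (Var y) = cpair 0 y" "code_trm (Fn s ts) = cpair 1 (cpair s (list_encode (map code_trm ts)))"
  by (auto simp: cpair_def)

lemma code_fm_cpair[simp]:
  "code_fm (Rel r ts) = cpair 0 (cpair r (list_encode (map code_trm ts)))"
  "code_fm (Dist t u) = cpair 1 (cpair (code_trm t) (code_trm u))"
  "code_fm (CZero p) = cpair 2 (code_fm p)"
  "code_fm (COne p) = cpair 3 (code_fm p)"
  "code_fm (Half p) = cpair 4 (code_fm p)"
  "code_fm (Monus p q) = cpair 5 (cpair (code_fm p) (code_fm q))"
  "code_fm (Sup x p) = cpair 6 (cpair x (code_fm p))"
  "code_fm (Inf x p) = cpair 7 (cpair x (code_fm p))"
  by (auto simp: cpair_def)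

lemma list_encode_cpair[simp]: "list_encode (x # xs) = Suc (cpair x (list_encode xs))"
  by (simp add: cpair_def)

declare code_trm.simps[simp del] code_fm.simps[simp del] list_encode.simps(2)[simp del]

lemma cpair_eq_iff: "cpair a b = c \<longleftrightarrow> a = cfst c \<and> b = csnd c"
  by (metis cfst_csnd_cpair cpair_cfst_csnd)

lemma code_length_encode[simp]: "code_length (list_encode xs) = length xs"
  by (simp add: code_length_def)

lemma code_hd_tl_Suc_cpair[simp]: "code_hd (Suc (cpair a b)) = a" "code_tl (Suc (cpair a b)) = b"
  by (auto simp: code_hd_def code_tl_def)

definition wf_trm_code where "wf_trm_code L c \<longleftrightarrow> (\<exists>t. code_trm t = c \<and> wf_trm L t)"
definition fresh_trm_code where "fresh_trm_code L x c \<longleftrightarrow> (\<exists>t. code_trm t = c \<and> wf_trm L t \<and> x \<notin> fv_trm t)"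
definition wf_trms_code where "wf_trms_code L c \<longleftrightarrow> (\<exists>ts. list_encode (map code_trm ts) = c \<and> (\<forall>t\<in>set ts. wf_trm L t))"
definition fresh_trms_code where "fresh_trms_code L x c \<longleftrightarrow> (\<exists>ts. list_encode (map code_trm ts) = c \<and> (\<forall>t\<in>set ts. wf_trm L t \<and> x \<notin> fv_trm t))"
definition wf_fm_code where "wf_fm_code L c \<longleftrightarrow> (\<exists>p. code_fm p = c \<and> wf_fm L p)"
definition fresh_fm_code where "fresh_fm_code L x c \<longleftrightarrow> (\<exists>p. code_fm p = c \<and> wf_fm L p \<and> x \<notin> fv_fm p)"

lemma wf_trm_code_iff: "wf_trm_code L c \<longleftrightarrow> cfst c = 0 \<or> (cfst c = 1 \<and> cfst (csnd c) \<in> fsyms L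
    \<and> code_length (csnd (csnd c)) = farity L (cfst (csnd c)) \<and> wf_trms_code L (csnd (csnd c)))"
proof
  assume "wf_trm_code L c"
  then obtain t where t: "code_trm t = c" "wf_trm L t" unfolding wf_trm_code_def by blast
  show "cfst c = 0 \<or> (cfst c = 1 \<and> cfst (csnd c) \<in> fsyms L
    \<and> code_length (csnd (csnd c)) = farity L (cfst (csnd c)) \<and> wf_trms_code L (csnd (csnd c)))"
  proof (cases t)
    case (Var y) then show ?thesis using t by auto
  next
    case (Fn s ts) then show ?thesis using t unfolding wf_trms_code_def by auto
  qed
next
  assume a: "cfst c = 0 \<or> (cfst c = 1 \<and> cfst (csnd c) \<in> fsyms L
    \<and> code_length (csnd (csnd c)) = farity L (cfst (csnd c)) \<and> wf_trms_code L (csnd (csnd c)))"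
  show "wf_trm_code L c"
  proof (cases "cfst c = 0")
    case True
    then have "code_trm (Var (csnd c)) = c" by (metis code_trm_cpair(1) cpair_cfst_csnd)
    then show ?thesis unfolding wf_trm_code_def by (metis wf_trm.simps(1))
  next
    case False
    with a obtain ts where ts: "list_encode (map code_trm ts) = csnd (csnd c)" "\<forall>t\<in>set ts. wf_trm L t"
      and c: "cfst c = 1" "cfst (csnd c) \<in> fsyms L" "code_length (csnd (csnd c)) = farity L (cfst (csnd c))"
      unfolding wf_trms_code_def by blast
    have "code_trm (Fn (cfst (csnd c)) ts) = c" using ts c by (simp add: cpair_eq_iff)
    moreover have "length ts = farity L (cfst (csnd c))" using c(3) ts(1)[symmetric] by simp
    ultimately show ?thesis unfolding wf_trm_code_def using ts c by (intro exI[of _ "Fn (cfst (csnd c)) ts"]) auto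
  qed
qed

lemma fresh_trm_code_iff: "fresh_trm_code L x c \<longleftrightarrow> (cfst c = 0 \<and> csnd c \<noteq> x) \<or> (cfst c = 1 \<and> cfst (csnd c) \<in> fsyms L
    \<and> code_length (csnd (csnd c)) = farity L (cfst (csnd c)) \<and> fresh_trms_code L x (csnd (csnd c)))"
proof
  assume "fresh_trm_code L x c"
  then obtain t where t: "code_trm t = c" "wf_trm L t" "x \<notin> fv_trm t" unfolding fresh_trm_code_def by blast
  show "(cfst c = 0 \<and> csnd c \<noteq> x) \<or> (cfst c = 1 \<and> cfst (csnd c) \<in> fsyms L
    \<and> code_length (csnd (csnd c)) = farity L (cfst (csnd c)) \<and> fresh_trms_code L x (csnd (csnd c)))"
  proof (cases t)
    case (Var y) then show ?thesis using t by auto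
  next
    case (Fn s ts) then show ?thesis using t unfolding fresh_trms_code_def by auto
  qed
next
  assume a: "(cfst c = 0 \<and> csnd c \<noteq> x) \<or> (cfst c = 1 \<and> cfst (csnd c) \<in> fsyms L
    \<and> code_length (csnd (csnd c)) = farity L (cfst (csnd c)) \<and> fresh_trms_code L x (csnd (csnd c)))"
  show "fresh_trm_code L x c"
  proof (cases "cfst c = 0")
    case True
    then have "code_trm (Var (csnd c)) = c" by (metis code_trm_cpair(1) cpair_cfst_csnd)
    then show ?thesis unfolding fresh_trm_code_def using a True by (intro exI[of _ "Var (csnd c)"]) auto
  next
    case False
    with a obtain ts where ts: "list_encode (map code_trm ts) = csnd (csnd c)" "\<forall>t\<in>set ts. wf_trm L t \<and> x \<notin> fv_trm t"
      and c: "cfst c = 1" "cfst (csnd c) \<in> fsyms L" "code_length (csnd (csnd c)) = farity L (cfst (csnd c))"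
      unfolding fresh_trms_code_def by blast
    have "code_trm (Fn (cfst (csnd c)) ts) = c" using ts c by (simp add: cpair_eq_iff)
    moreover have "length ts = farity L (cfst (csnd c))" using c(3) ts(1)[symmetric] by simp
    ultimately show ?thesis unfolding fresh_trm_code_def using ts c by (intro exI[of _ "Fn (cfst (csnd c)) ts"]) auto
  qed
qed

lemma Suc_cpair_code_hd_tl: "c \<noteq> 0 \<Longrightarrow> Suc (cpair (code_hd c) (code_tl c)) = c"
  by (cases c) (auto simp: code_hd_def code_tl_def)

lemma wf_trms_code_iff: "wf_trms_code L c \<longleftrightarrow> c = 0 \<or> (wf_trm_code L (code_hd c) \<and> wf_trms_code L (code_tl c))"
proof
  assume "wf_trms_code L c"
  then obtain ts where ts: "list_encode (map code_trm ts) = c" "\<forall>t\<in>set ts. wf_trm L t" unfolding wf_trms_code_def by blast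
  show "c = 0 \<or> (wf_trm_code L (code_hd c) \<and> wf_trms_code L (code_tl c))"
  proof (cases ts)
    case Nil then show ?thesis using ts by simp
  next
    case (Cons t ts') then show ?thesis using ts unfolding wf_trm_code_def wf_trms_code_def by auto
  qed
next
  assume a: "c = 0 \<or> (wf_trm_code L (code_hd c) \<and> wf_trms_code L (code_tl c))"
  show "wf_trms_code L c"
  proof (cases "c = 0")
    case True then show ?thesis unfolding wf_trms_code_def by (intro exI[of _ "[]"]) simp
  next
    case False
    with a obtain t ts where "code_trm t = code_hd c" "wf_trm L t" "list_encode (map code_trm ts) = code_tl c" "\<forall>t\<in>set ts. wf_trm L t"
      unfolding wf_trm_code_def wf_trms_code_def by blast
    then show ?thesis unfolding wf_trms_code_def using Suc_cpair_code_hd_tl[OF False] by (intro exI[of _ "t # ts"]) auto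
  qed
qed

lemma fresh_trms_code_iff: "fresh_trms_code L x c \<longleftrightarrow> c = 0 \<or> (fresh_trm_code L x (code_hd c) \<and> fresh_trms_code L x (code_tl c))"
proof
  assume "fresh_trms_code L x c"
  then obtain ts where ts: "list_encode (map code_trm ts) = c" "\<forall>t\<in>set ts. wf_trm L t \<and> x \<notin> fv_trm t" unfolding fresh_trms_code_def by blast
  show "c = 0 \<or> (fresh_trm_code L x (code_hd c) \<and> fresh_trms_code L x (code_tl c))"
  proof (cases ts)
    case Nil then show ?thesis using ts by simp
  next
    case (Cons t ts') then show ?thesis using ts unfolding fresh_trm_code_def fresh_trms_code_def by auto
  qed
next
  assume a: "c = 0 \<or> (fresh_trm_code L x (code_hd c) \<and> fresh_trms_code L x (code_tl c))"
  show "fresh_trms_code L x c"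
  proof (cases "c = 0")
    case True then show ?thesis unfolding fresh_trms_code_def by (intro exI[of _ "[]"]) simp
  next
    case False
    with a obtain t ts where "code_trm t = code_hd c" "wf_trm L t" "x \<notin> fv_trm t" "list_encode (map code_trm ts) = code_tl c"
      "\<forall>t\<in>set ts. wf_trm L t \<and> x \<notin> fv_trm t"
      unfolding fresh_trm_code_def fresh_trms_code_def by blast
    then show ?thesis unfolding fresh_trms_code_def using Suc_cpair_code_hd_tl[OF False] by (intro exI[of _ "t # ts"]) auto
  qed
qed

lemma wf_trm_code_I: "wf_trm L t \<Longrightarrow> wf_trm_code L (code_trm t)" unfolding wf_trm_code_def by blast
lemma fresh_trm_code_I: "wf_trm L t \<Longrightarrow> x \<notin> fv_trm t \<Longrightarrow> fresh_trm_code L x (code_trm t)" unfolding fresh_trm_code_def by blast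
lemma wf_trms_code_I: "\<forall>t\<in>set ts. wf_trm L t \<Longrightarrow> wf_trms_code L (list_encode (map code_trm ts))" unfolding wf_trms_code_def by blast
lemma fresh_trms_code_I: "\<forall>t\<in>set ts. wf_trm L t \<and> x \<notin> fv_trm t \<Longrightarrow> fresh_trms_code L x (list_encode (map code_trm ts))" unfolding fresh_trms_code_def by blast
lemma wf_fm_code_I: "wf_fm L p \<Longrightarrow> wf_fm_code L (code_fm p)" unfolding wf_fm_code_def by blast
lemma fresh_fm_code_I: "wf_fm L p \<Longrightarrow> x \<notin> fv_fm p \<Longrightarrow> fresh_fm_code L x (code_fm p)" unfolding fresh_fm_code_def by blast

lemma wf_fm_code_iff: "wf_fm_code L c \<longleftrightarrow>
   (cfst c = 0 \<and> cfst (csnd c) \<in> rsyms L \<and> code_length (csnd (csnd c)) = rarity L (cfst (csnd c)) \<and> wf_trms_code L (csnd (csnd c)))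
 \<or> (cfst c = 1 \<and> wf_trm_code L (cfst (csnd c)) \<and> wf_trm_code L (csnd (csnd c)))
 \<or> ((cfst c = 2 \<or> cfst c = 3 \<or> cfst c = 4) \<and> wf_fm_code L (csnd c))
 \<or> (cfst c = 5 \<and> wf_fm_code L (cfst (csnd c)) \<and> wf_fm_code L (csnd (csnd c)))
 \<or> ((cfst c = 6 \<or> cfst c = 7) \<and> wf_fm_code L (csnd (csnd c)))" (is "_ \<longleftrightarrow> ?R")
proof
  assume "wf_fm_code L c"
  then obtain p where p: "code_fm p = c" "wf_fm L p" unfolding wf_fm_code_def by blast
  show ?R unfolding p(1)[symmetric] using p(2) by (cases p) (auto intro: wf_trm_code_I wf_trms_code_I wf_fm_code_I)
next
  assume a: ?R
  have c: "c = cpair (cfst c) (csnd c)" "csnd c = cpair (cfst (csnd c)) (csnd (csnd c))" by simp_all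
  from a show "wf_fm_code L c"
  proof (elim disjE conjE)
    assume h: "cfst c = 0" "cfst (csnd c) \<in> rsyms L" "code_length (csnd (csnd c)) = rarity L (cfst (csnd c))" "wf_trms_code L (csnd (csnd c))"
    then obtain ts where ts: "list_encode (map code_trm ts) = csnd (csnd c)" "\<forall>t\<in>set ts. wf_trm L t" unfolding wf_trms_code_def by blast
    have "length ts = rarity L (cfst (csnd c))" using h(3) ts(1)[symmetric] by simp
    then show ?thesis unfolding wf_fm_code_def using h ts c by (intro exI[of _ "Rel (cfst (csnd c)) ts"]) (auto simp: cpair_eq_iff)
  next
    assume h: "cfst c = 1" "wf_trm_code L (cfst (csnd c))" "wf_trm_code L (csnd (csnd c))"
    then obtain t u where "code_trm t = cfst (csnd c)" "wf_trm L t" "code_trm u = csnd (csnd c)" "wf_trm L u" unfolding wf_trm_code_def by blast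
    then show ?thesis unfolding wf_fm_code_def using h by (intro exI[of _ "Dist t u"]) (auto simp: cpair_eq_iff)
  next
    assume h: "cfst c = 2" "wf_fm_code L (csnd c)"
    then obtain q where "code_fm q = csnd c" "wf_fm L q" unfolding wf_fm_code_def by blast
    then show ?thesis unfolding wf_fm_code_def using h by (intro exI[of _ "CZero q"]) (auto simp: cpair_eq_iff)
  next
    assume h: "cfst c = 3" "wf_fm_code L (csnd c)"
    then obtain q where "code_fm q = csnd c" "wf_fm L q" unfolding wf_fm_code_def by blast
    then show ?thesis unfolding wf_fm_code_def using h by (intro exI[of _ "COne q"]) (auto simp: cpair_eq_iff)
  next
    assume h: "cfst c = 4" "wf_fm_code L (csnd c)"
    then obtain q where "code_fm q = csnd c" "wf_fm L q" unfolding wf_fm_code_def by blast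
    then show ?thesis unfolding wf_fm_code_def using h by (intro exI[of _ "Half q"]) (auto simp: cpair_eq_iff)
  next
    assume h: "cfst c = 5" "wf_fm_code L (cfst (csnd c))" "wf_fm_code L (csnd (csnd c))"
    then obtain q r where "code_fm q = cfst (csnd c)" "wf_fm L q" "code_fm r = csnd (csnd c)" "wf_fm L r" unfolding wf_fm_code_def by blast
    then show ?thesis unfolding wf_fm_code_def using h by (intro exI[of _ "Monus q r"]) (auto simp: cpair_eq_iff)
  next
    assume h: "cfst c = 6" "wf_fm_code L (csnd (csnd c))"
    then obtain q where "code_fm q = csnd (csnd c)" "wf_fm L q" unfolding wf_fm_code_def by blast
    then show ?thesis unfolding wf_fm_code_def using h by (intro exI[of _ "Sup (cfst (csnd c)) q"]) (auto simp: cpair_eq_iff)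
  next
    assume h: "cfst c = 7" "wf_fm_code L (csnd (csnd c))"
    then obtain q where "code_fm q = csnd (csnd c)" "wf_fm L q" unfolding wf_fm_code_def by blast
    then show ?thesis unfolding wf_fm_code_def using h by (intro exI[of _ "Inf (cfst (csnd c)) q"]) (auto simp: cpair_eq_iff)
  qed
qed

lemma fresh_fm_code_iff: "fresh_fm_code L x c \<longleftrightarrow>
   (cfst c = 0 \<and> cfst (csnd c) \<in> rsyms L \<and> code_length (csnd (csnd c)) = rarity L (cfst (csnd c)) \<and> fresh_trms_code L x (csnd (csnd c)))
 \<or> (cfst c = 1 \<and> fresh_trm_code L x (cfst (csnd c)) \<and> fresh_trm_code L x (csnd (csnd c)))
 \<or> ((cfst c = 2 \<or> cfst c = 3 \<or> cfst c = 4) \<and> fresh_fm_code L x (csnd c))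
 \<or> (cfst c = 5 \<and> fresh_fm_code L x (cfst (csnd c)) \<and> fresh_fm_code L x (csnd (csnd c)))
 \<or> ((cfst c = 6 \<or> cfst c = 7) \<and> wf_fm_code L (csnd (csnd c)) \<and> (cfst (csnd c) = x \<or> fresh_fm_code L x (csnd (csnd c))))" (is "_ \<longleftrightarrow> ?R")
proof
  assume "fresh_fm_code L x c"
  then obtain p where p: "code_fm p = c" "wf_fm L p" "x \<notin> fv_fm p" unfolding fresh_fm_code_def by blast
  show ?R unfolding p(1)[symmetric] using p(2,3) by (cases p) (auto intro: fresh_trm_code_I fresh_trms_code_I fresh_fm_code_I wf_fm_code_I)
next
  assume a: ?R
  have c: "c = cpair (cfst c) (csnd c)" "csnd c = cpair (cfst (csnd c)) (csnd (csnd c))" by simp_all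
  from a show "fresh_fm_code L x c"
  proof (elim disjE conjE)
    assume h: "cfst c = 0" "cfst (csnd c) \<in> rsyms L" "code_length (csnd (csnd c)) = rarity L (cfst (csnd c))" "fresh_trms_code L x (csnd (csnd c))"
    then obtain ts where ts: "list_encode (map code_trm ts) = csnd (csnd c)" "\<forall>t\<in>set ts. wf_trm L t \<and> x \<notin> fv_trm t" unfolding fresh_trms_code_def by blast
    have "length ts = rarity L (cfst (csnd c))" using h(3) ts(1)[symmetric] by simp
    then show ?thesis unfolding fresh_fm_code_def using h ts c by (intro exI[of _ "Rel (cfst (csnd c)) ts"]) (auto simp: cpair_eq_iff)
  next
    assume h: "cfst c = 1" "fresh_trm_code L x (cfst (csnd c))" "fresh_trm_code L x (csnd (csnd c))"
    then obtain t u where "code_trm t = cfst (csnd c)" "wf_trm L t" "code_trm u = csnd (csnd c)" "wf_trm L u"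
      "x \<notin> fv_trm t" "x \<notin> fv_trm u" unfolding fresh_trm_code_def by blast
    then show ?thesis unfolding fresh_fm_code_def using h by (intro exI[of _ "Dist t u"]) (auto simp: cpair_eq_iff)
  next
    assume h: "cfst c = 2" "fresh_fm_code L x (csnd c)"
    then obtain q where "code_fm q = csnd c" "wf_fm L q" "x \<notin> fv_fm q" unfolding fresh_fm_code_def by blast
    then show ?thesis unfolding fresh_fm_code_def using h by (intro exI[of _ "CZero q"]) (auto simp: cpair_eq_iff)
  next
    assume h: "cfst c = 3" "fresh_fm_code L x (csnd c)"
    then obtain q where "code_fm q = csnd c" "wf_fm L q" "x \<notin> fv_fm q" unfolding fresh_fm_code_def by blast
    then show ?thesis unfolding fresh_fm_code_def using h by (intro exI[of _ "COne q"]) (auto simp: cpair_eq_iff)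
  next
    assume h: "cfst c = 4" "fresh_fm_code L x (csnd c)"
    then obtain q where "code_fm q = csnd c" "wf_fm L q" "x \<notin> fv_fm q" unfolding fresh_fm_code_def by blast
    then show ?thesis unfolding fresh_fm_code_def using h by (intro exI[of _ "Half q"]) (auto simp: cpair_eq_iff)
  next
    assume h: "cfst c = 5" "fresh_fm_code L x (cfst (csnd c))" "fresh_fm_code L x (csnd (csnd c))"
    then obtain q r where "code_fm q = cfst (csnd c)" "wf_fm L q" "code_fm r = csnd (csnd c)" "wf_fm L r"
      "x \<notin> fv_fm q" "x \<notin> fv_fm r" unfolding fresh_fm_code_def by blast
    then show ?thesis unfolding fresh_fm_code_def using h by (intro exI[of _ "Monus q r"]) (auto simp: cpair_eq_iff)
  next
    assume h: "cfst c = 6" "wf_fm_code L (csnd (csnd c))" "cfst (csnd c) = x"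
    then obtain q where "code_fm q = csnd (csnd c)" "wf_fm L q" unfolding wf_fm_code_def by blast
    then show ?thesis unfolding fresh_fm_code_def using h by (intro exI[of _ "Sup (cfst (csnd c)) q"]) (auto simp: cpair_eq_iff)
  next
    assume h: "cfst c = 6" "wf_fm_code L (csnd (csnd c))" "fresh_fm_code L x (csnd (csnd c))"
    then obtain q where "code_fm q = csnd (csnd c)" "wf_fm L q" "x \<notin> fv_fm q" unfolding fresh_fm_code_def by blast
    then show ?thesis unfolding fresh_fm_code_def using h by (intro exI[of _ "Sup (cfst (csnd c)) q"]) (auto simp: cpair_eq_iff)
  next
    assume h: "cfst c = 7" "wf_fm_code L (csnd (csnd c))" "cfst (csnd c) = x"
    then obtain q where "code_fm q = csnd (csnd c)" "wf_fm L q" unfolding wf_fm_code_def by blast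
    then show ?thesis unfolding fresh_fm_code_def using h by (intro exI[of _ "Inf (cfst (csnd c)) q"]) (auto simp: cpair_eq_iff)
  next
    assume h: "cfst c = 7" "wf_fm_code L (csnd (csnd c))" "fresh_fm_code L x (csnd (csnd c))"
    then obtain q where "code_fm q = csnd (csnd c)" "wf_fm L q" "x \<notin> fv_fm q" unfolding fresh_fm_code_def by blast
    then show ?thesis unfolding fresh_fm_code_def using h by (intro exI[of _ "Inf (cfst (csnd c)) q"]) (auto simp: cpair_eq_iff)
  qed
qed

lemma hist_bit_add_high: "k < m \<Longrightarrow> (H + 2^m * v) div 2^k mod 2 = H div 2^k mod (2::nat)"
proof -
  assume "k < m"
  then obtain d where m': "m = Suc (k + d)" using less_imp_Suc_add by blast
  then have m: "m = k + Suc d" by simp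
  have e: "(2::nat)^m * v = 2^k * (2 * (2^d * v))" unfolding m power_add by simp
  have "(H + 2^k * (2 * (2^d * v))) div 2^k = 2 * (2^d * v) + H div 2^k"
    by (rule div_mult_self2) simp
  then have "(H + 2^m * v) div 2^k = 2 * (2^d * v) + H div 2^k" unfolding e .
  then show ?thesis by (simp only: mod_mult_self4)
qed

lemma div_add_high: "H < 2^m \<Longrightarrow> (H + 2^m * v) div 2^(m+b) = v div (2::nat)^b"
proof -
  assume "H < 2^m"
  then have "(H + 2^m * v) div 2^m = v" by simp
  then show ?thesis by (simp add: power_add div_mult2_eq)
qed

definition bits6 :: "nat \<Rightarrow> nat \<Rightarrow> nat \<Rightarrow> nat \<Rightarrow> nat \<Rightarrow> nat \<Rightarrow> nat" where
  "bits6 a0 a1 a2 a3 a4 a5 = a0 + 2 * (a1 + 2 * (a2 + 2 * (a3 + 2 * (a4 + 2 * a5))))"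

lemma div_power_Suc_2: "(x::nat) div 2^Suc k = x div 2 div 2^k"
  by (metis div_mult2_eq power_Suc)

lemma div2_bit_plus: "a \<le> 1 \<Longrightarrow> (a + 2 * r) div 2 = (r::nat)"
  by simp

lemma mod2_bit_plus: "a \<le> 1 \<Longrightarrow> (a + 2 * r) mod 2 = (a::nat)"
  by simp

lemma bits6_shift: "a0 \<le> 1 \<Longrightarrow> bits6 a0 a1 a2 a3 a4 a5 div 2^Suc b = bits6 a1 a2 a3 a4 a5 0 div 2^b"
  unfolding div_power_Suc_2 bits6_def by (subst div2_bit_plus) simp_all

lemma bits6_0: assumes "a0 \<le> 1" shows "bits6 a0 a1 a2 a3 a4 a5 div 2^0 mod 2 = a0"
  by (simp only: bits6_def power_0 div_by_1 mod2_bit_plus[OF assms])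

lemma bits6_bit:
  "a0 \<le> 1 \<Longrightarrow> a1 \<le> 1 \<Longrightarrow> a2 \<le> 1 \<Longrightarrow> a3 \<le> 1 \<Longrightarrow> a4 \<le> 1 \<Longrightarrow> a5 \<le> 1 \<Longrightarrow> b < 6 \<Longrightarrow>
   bits6 a0 a1 a2 a3 a4 a5 div 2^b mod 2 = [a0,a1,a2,a3,a4,a5] ! b"
proof (induction b arbitrary: a0 a1 a2 a3 a4 a5)
  case 0 then show ?case using bits6_0 by simp
next
  case (Suc b)
  have "bits6 a0 a1 a2 a3 a4 a5 div 2^Suc b mod 2 = bits6 a1 a2 a3 a4 a5 0 div 2^b mod 2"
    using bits6_shift[OF Suc.prems(1)] by simp
  also have "\<dots> = [a1,a2,a3,a4,a5,0] ! b" using Suc by simp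
  also have "\<dots> = [a0,a1,a2,a3,a4,a5] ! Suc b" using Suc.prems(7)
    by (cases b; cases "b - 1"; cases "b - 2"; cases "b - 3"; cases "b - 4") auto
  finally show ?case .
qed

definition code_profile :: "clang \<Rightarrow> nat \<Rightarrow> nat \<Rightarrow> nat" where
  "code_profile L x c = bits6 (ind (wf_trm_code L c)) (ind (fresh_trm_code L x c)) (ind (wf_trms_code L c)) (ind (fresh_trms_code L x c))
     (ind (wf_fm_code L c)) (ind (fresh_fm_code L x c))"

definition profile_bit :: "clang \<Rightarrow> nat \<Rightarrow> nat \<Rightarrow> nat \<Rightarrow> nat" where
  "profile_bit L x i b = code_profile L x i div 2^b mod 2"

lemma ind_le1[simp]: "ind P \<le> Suc 0" by (simp add: ind_def)
lemma ind_Suc0[simp]: "ind P = Suc 0 \<longleftrightarrow> P" "Suc 0 = ind P \<longleftrightarrow> P" "1 = ind P \<longleftrightarrow> P" "0 = ind P \<longleftrightarrow> \<not> P"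
  by (auto simp: ind_def)

lemma profile_bit_eq: "b < 6 \<Longrightarrow> profile_bit L x i b = [ind (wf_trm_code L i), ind (fresh_trm_code L x i), ind (wf_trms_code L i), ind (fresh_trms_code L x i), ind (wf_fm_code L i), ind (fresh_fm_code L x i)] ! b"
  unfolding profile_bit_def code_profile_def by (rule bits6_bit) simp_all

lemma profile_bit_simps[simp]: "profile_bit L x i 0 = ind (wf_trm_code L i)" "profile_bit L x i 1 = ind (fresh_trm_code L x i)" "profile_bit L x i 2 = ind (wf_trms_code L i)"
  "profile_bit L x i 3 = ind (fresh_trms_code L x i)" "profile_bit L x i 4 = ind (wf_fm_code L i)" "profile_bit L x i 5 = ind (fresh_fm_code L x i)"
  "profile_bit L x i (Suc 0) = ind (fresh_trm_code L x i)"
  by (simp_all add: profile_bit_eq)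

lemma code_profile_less_64: "code_profile L x c < 64"
proof -
  have "ind (wf_trm_code L c) \<le> 1" "ind (fresh_trm_code L x c) \<le> 1" "ind (wf_trms_code L c) \<le> 1" "ind (fresh_trms_code L x c) \<le> 1"
    "ind (wf_fm_code L c) \<le> 1" "ind (fresh_fm_code L x c) \<le> 1" by simp_all
  then show ?thesis unfolding code_profile_def bits6_def by (simp only: distrib_left)
qed

lemma csnd_less: "cfst c \<noteq> 0 \<Longrightarrow> csnd c < c"
  using cpair_greater_snd[of "cfst c" "csnd c"] by simp

lemma code_components_less:
  "cfst c \<noteq> 0 \<Longrightarrow> csnd (csnd c) < c" "cfst c \<noteq> 0 \<Longrightarrow> cfst (csnd c) < c"
  "cfst c \<noteq> 0 \<Longrightarrow> csnd c < c" "csnd (csnd c) \<le> c"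
  using csnd_less[of c] cfst_csnd_le(1,2)[of "csnd c"] cfst_csnd_le(2)[of c] by linarith+

lemma code_hd_less: "c \<noteq> 0 \<Longrightarrow> code_hd c < c" and code_tl_less: "c \<noteq> 0 \<Longrightarrow> code_tl c < c"
  using Suc_cpair_code_hd_tl[of c] cpair_ge_fst[of "code_hd c" "code_tl c"] cpair_ge_snd[of "code_tl c" "code_hd c"] by simp_all

definition hist_correct :: "clang \<Rightarrow> nat \<Rightarrow> nat \<Rightarrow> nat \<Rightarrow> bool" where
  "hist_correct L x H c \<longleftrightarrow> H < 2^(6*c) \<and> (\<forall>i<c. \<forall>b<6. hist_bit H i b = profile_bit L x i b)"

lemma trm_profile_step_ok:
  assumes g: "hist_correct L x H c"
  shows "trm_profile_step L x c H = ind (wf_trm_code L c) + 2 * ind (fresh_trm_code L x c) + 4 * ind (wf_trms_code L c) + 8 * ind (fresh_trms_code L x c)"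
proof -
  have lk: "\<And>i b. i < c \<Longrightarrow> b < 6 \<Longrightarrow> hist_bit H i b = profile_bit L x i b" using g unfolding hist_correct_def by blast
  note p2 = code_components_less(1)
  have "trm_wf_step L c H = ind (wf_trm_code L c)"
    unfolding trm_wf_step_def wf_trm_code_iff[of L c] using lk[of "csnd (csnd c)" 2] p2 by (auto simp: ind_def)
  moreover have "trm_fresh_step L x c H = ind (fresh_trm_code L x c)"
    unfolding trm_fresh_step_def fresh_trm_code_iff[of L x c] using lk[of "csnd (csnd c)" 3] p2 by (auto simp: ind_def)
  moreover have "trms_wf_step c H = ind (wf_trms_code L c)"
    unfolding trms_wf_step_def wf_trms_code_iff[of L c] using lk[of "code_hd c" 0] lk[of "code_tl c" 2] code_hd_less[of c] code_tl_less[of c]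
    by (auto simp: ind_def)
  moreover have "trms_fresh_step c H = ind (fresh_trms_code L x c)"
    unfolding trms_fresh_step_def fresh_trms_code_iff[of L x c] using lk[of "code_hd c" 1] lk[of "code_tl c" 3] code_hd_less[of c] code_tl_less[of c]
    by (auto simp: ind_def)
  ultimately show ?thesis unfolding trm_profile_step_def by simp
qed

lemma hist_correct_extend_trm_bits:
  assumes g: "hist_correct L x H c" and i: "i \<le> c" "b < 6" "i < c \<or> b < 4"
  shows "hist_bit (H + 2^(6*c) * trm_profile_step L x c H) i b = profile_bit L x i b"
proof (cases "i < c")
  case True
  then have "6*i+b < 6*c" using i by linarith
  then show ?thesis using g True i(2) hist_bit_add_high unfolding hist_correct_def hist_bit_def by simp
next
  case False
  then have ic: "i = c" "b < 4" using i by auto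
  let ?T = "bits6 (ind (wf_trm_code L c)) (ind (fresh_trm_code L x c)) (ind (wf_trms_code L c))
    (ind (fresh_trms_code L x c)) 0 0"
  have T: "trm_profile_step L x c H = ?T"
    unfolding bits6_def using trm_profile_step_ok[OF g] by simp
  have "hist_bit (H + 2^(6*c) * trm_profile_step L x c H) i b = ?T div 2^b mod 2"
    using g div_add_high unfolding T hist_bit_def ic hist_correct_def by simp
  also have "\<dots> = [ind (wf_trm_code L c), ind (fresh_trm_code L x c), ind (wf_trms_code L c),
      ind (fresh_trms_code L x c), 0, 0] ! b"
    by (rule bits6_bit) (use ic in simp_all)
  also have "\<dots> = profile_bit L x i b"
    using ic profile_bit_eq[of b L x i] by (auto simp: less_Suc_eq numeral_eq_Suc)
  finally show ?thesis .
qed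

lemma fm_wf_step_ok:
  assumes h: "\<And>i b. i \<le> c \<Longrightarrow> b < 6 \<Longrightarrow> i < c \<or> b < 4 \<Longrightarrow> hist_bit H i b = profile_bit L x i b"
  shows "fm_wf_step L c H = ind (wf_fm_code L c)"
proof -
  consider "cfst c = 0" | "cfst c = 1" | "cfst c = 2 \<or> cfst c = 3 \<or> cfst c = 4" | "cfst c = 5"
    | "cfst c = 6 \<or> cfst c = 7" | "cfst c > 7" by linarith
  then show ?thesis
  proof cases
    case 1 then show ?thesis unfolding fm_wf_step_def wf_fm_code_iff[of L c]
      using h[of "csnd (csnd c)" 2] code_components_less[of c] by simp
  next
    case 2 then show ?thesis unfolding fm_wf_step_def wf_fm_code_iff[of L c]
      using h[of "cfst (csnd c)" 0] h[of "csnd (csnd c)" 0] code_components_less[of c] by simp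
  next
    case 3 then show ?thesis unfolding fm_wf_step_def wf_fm_code_iff[of L c]
      using h[of "csnd c" 4] code_components_less[of c] by auto
  next
    case 4 then show ?thesis unfolding fm_wf_step_def wf_fm_code_iff[of L c]
      using h[of "cfst (csnd c)" 4] h[of "csnd (csnd c)" 4] code_components_less[of c] by simp
  next
    case 5 then show ?thesis unfolding fm_wf_step_def wf_fm_code_iff[of L c]
      using h[of "csnd (csnd c)" 4] code_components_less[of c] by auto
  qed (simp add: fm_wf_step_def wf_fm_code_iff[of L c])
qed

lemma fm_fresh_step_ok:
  assumes h: "\<And>i b. i \<le> c \<Longrightarrow> b < 6 \<Longrightarrow> i < c \<or> b < 4 \<Longrightarrow> hist_bit H i b = profile_bit L x i b"
  shows "fm_fresh_step L x c H = ind (fresh_fm_code L x c)"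
proof -
  consider "cfst c = 0" | "cfst c = 1" | "cfst c = 2 \<or> cfst c = 3 \<or> cfst c = 4" | "cfst c = 5"
    | "cfst c = 6 \<or> cfst c = 7" | "cfst c > 7" by linarith
  then show ?thesis
  proof cases
    case 1 then show ?thesis unfolding fm_fresh_step_def fresh_fm_code_iff[of L x c]
      using h[of "csnd (csnd c)" 3] code_components_less[of c] by simp
  next
    case 2 then show ?thesis unfolding fm_fresh_step_def fresh_fm_code_iff[of L x c]
      using h[of "cfst (csnd c)" 1] h[of "csnd (csnd c)" 1] code_components_less[of c] by simp
  next
    case 3 then show ?thesis unfolding fm_fresh_step_def fresh_fm_code_iff[of L x c]
      using h[of "csnd c" 5] code_components_less[of c] by auto
  next
    case 4 then show ?thesis unfolding fm_fresh_step_def fresh_fm_code_iff[of L x c]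
      using h[of "cfst (csnd c)" 5] h[of "csnd (csnd c)" 5] code_components_less[of c] by simp
  next
    case 5 then show ?thesis unfolding fm_fresh_step_def fresh_fm_code_iff[of L x c]
      using h[of "csnd (csnd c)" 4] h[of "csnd (csnd c)" 5] code_components_less[of c] by auto
  qed (simp add: fm_fresh_step_def fresh_fm_code_iff[of L x c])
qed

text \<open>The term and list bits of \<open>c\<close> are written before its formula bits are computed: an atomic
  formula may have a code whose argument list has the same code (e.g. \<open>cpair 0 (cpair 0 1) = 1\<close>).\<close>
lemma profile_step_ok:
  assumes g: "hist_correct L x H c"
  shows "profile_step L x c H = code_profile L x c"
  using trm_profile_step_ok[OF g] fm_wf_step_ok[OF hist_correct_extend_trm_bits[OF g]]
    fm_fresh_step_ok[OF hist_correct_extend_trm_bits[OF g]]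
  unfolding profile_step_def code_profile_def bits6_def by simp

lemma hist_correct_profile_hist: "hist_correct L x (profile_hist L x z) z"
proof (induction z)
  case 0 then show ?case by (simp add: hist_correct_def)
next
  case (Suc z)
  have e: "profile_step L x z (profile_hist L x z) = code_profile L x z" by (rule profile_step_ok[OF Suc])
  have Hlt: "profile_hist L x z < 2^(6*z)" using Suc unfolding hist_correct_def by blast
  have lt: "profile_hist L x (Suc z) < 2^(6 * Suc z)"
  proof -
    have "profile_hist L x (Suc z) = profile_hist L x z + 2^(6*z) * code_profile L x z" using e by simp
    also have "\<dots> < 2^(6*z) + 2^(6*z) * 63"
      using Hlt code_profile_less_64[of L x z] by (intro add_less_le_mono) auto
    also have "\<dots> = 2^(6 * Suc z)" by (simp add: power_add)
    finally show ?thesis .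
  qed
  have "\<forall>i<Suc z. \<forall>b<6. hist_bit (profile_hist L x (Suc z)) i b = profile_bit L x i b"
  proof (intro allI impI)
    fix i b :: nat assume i: "i < Suc z" and b: "b < 6"
    show "hist_bit (profile_hist L x (Suc z)) i b = profile_bit L x i b"
    proof (cases "i < z")
      case True
      then have "6*i+b < 6*z" using b by linarith
      then show ?thesis using Suc True b e hist_bit_add_high unfolding hist_correct_def hist_bit_def by simp
    next
      case False
      then have "i = z" using i by simp
      then show ?thesis using e div_add_high[OF Hlt] unfolding hist_bit_def profile_bit_def by simp
    qed
  qed
  then show ?case using lt unfolding hist_correct_def by blast
qed

lemma hist_bit_profile_hist: "hist_bit (profile_hist L x (Suc c)) c b = profile_bit L x c b" if "b < 6"
  using hist_correct_profile_hist[of L x "Suc c"] that unfolding hist_correct_def by simp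

lemma is_sent_code_iff: "is_sent_code L c \<longleftrightarrow> wf_fm_code L c \<and> (\<forall>x\<le>c. fresh_fm_code L x c)"
  unfolding is_sent_code_def using hist_bit_profile_hist[of 4 L 0 c] hist_bit_profile_hist[of 5 L _ c] by simp

lemma cpair_inj[simp]: "cpair a b = cpair c d \<longleftrightarrow> a = c \<and> b = d"
  by (auto simp: cpair_def)

declare list_encode_eq[simp]

lemma map_eq_map_imp_eq: "(\<forall>t\<in>set ts. \<forall>u. g t = g u \<longrightarrow> t = u) \<Longrightarrow> map g ts = map g us \<Longrightarrow> ts = us"
proof (induction ts arbitrary: us)
  case Nil then show ?case by simp
next
  case (Cons t ts) then show ?case by (cases us) auto
qed

lemma code_trm_inj: "code_trm t = code_trm u \<Longrightarrow> t = u"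
proof (induction t arbitrary: u)
  case (Var y) then show ?case by (cases u) auto
next
  case (Fn s ts)
  then show ?case
  proof (cases u)
    case (Var y) then show ?thesis using Fn by simp
  next
    case (Fn s' us)
    then have "s = s'" "map code_trm ts = map code_trm us" using Fn.prems by auto
    moreover have "ts = us" by (rule map_eq_map_imp_eq[OF _ calculation(2)]) (use Fn.IH in blast)
    ultimately show ?thesis using Fn by simp
  qed
qed

lemma map_code_trm_eq[simp]: "map code_trm ts = map code_trm us \<longleftrightarrow> ts = us"
  using map_eq_map_imp_eq[of ts code_trm us] code_trm_inj by blast

lemma code_trm_eq[simp]: "code_trm t = code_trm u \<longleftrightarrow> t = u"
  using code_trm_inj by blast

lemma code_fm_inj: "code_fm p = code_fm q \<Longrightarrow> p = q"
  by (induction p arbitrary: q; case_tac q; simp)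

lemma inj_code_fm: "inj code_fm"
  by (rule injI) (rule code_fm_inj)

lemma fm_of_code_code[simp]: "fm_of_code (code_fm p) = p"
  unfolding fm_of_code_def by (rule inv_f_f[OF inj_code_fm])

lemma le_list_encode: "y \<in> set ys \<Longrightarrow> y \<le> list_encode ys"
proof (induction ys)
  case Nil then show ?case by simp
next
  case (Cons a ys)
  have "a \<le> cpair a (list_encode ys)" "list_encode ys \<le> cpair a (list_encode ys)" by (rule cpair_ge_fst, rule cpair_ge_snd)
  then show ?case using Cons by auto
qed

lemma fv_trm_le: "x \<in> fv_trm t \<Longrightarrow> x \<le> code_trm t"
proof (induction t)
  case (Var y) then show ?case using cpair_ge_snd[of y 0] by simp
next
  case (Fn s ts)
  then obtain t where t: "t \<in> set ts" "x \<in> fv_trm t" by auto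
  then have "x \<le> code_trm t" using Fn.IH by blast
  also have "\<dots> \<le> list_encode (map code_trm ts)" using t(1) by (intro le_list_encode) auto
  also have "\<dots> \<le> cpair s (list_encode (map code_trm ts))" by (rule cpair_ge_snd)
  also have "\<dots> \<le> code_trm (Fn s ts)" using cpair_ge_snd by simp
  finally show ?case .
qed

lemma fv_fm_le: "x \<in> fv_fm p \<Longrightarrow> x \<le> code_fm p"
proof (induction p)
  case (Rel r ts)
  then obtain t where t: "t \<in> set ts" "x \<in> fv_trm t" by auto
  then have "x \<le> code_trm t" by (rule_tac fv_trm_le)
  also have "\<dots> \<le> list_encode (map code_trm ts)" using t(1) by (intro le_list_encode) auto
  also have "\<dots> \<le> cpair r (list_encode (map code_trm ts))" by (rule cpair_ge_snd)
  also have "\<dots> \<le> code_fm (Rel r ts)" using cpair_ge_snd by simp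
  finally show ?case .
next
  case (Dist t u)
  then show ?case using fv_trm_le[of x t] fv_trm_le[of x u] cpair_ge_fst[of "code_trm t" "code_trm u"]
    cpair_ge_snd[of "code_trm u" "code_trm t"] cpair_ge_snd[of "cpair (code_trm t) (code_trm u)" 1] by auto
next
  case (CZero p) then show ?case using cpair_ge_snd[of "code_fm p" 2] by simp
next
  case (COne p) then show ?case using cpair_ge_snd[of "code_fm p" 3] by simp
next
  case (Half p) then show ?case using cpair_ge_snd[of "code_fm p" 4] by simp
next
  case (Monus p q) then show ?case using cpair_ge_fst[of "code_fm p" "code_fm q"]
    cpair_ge_snd[of "code_fm q" "code_fm p"] cpair_ge_snd[of "cpair (code_fm p) (code_fm q)" 5] by auto
next
  case (Sup y p) then show ?case using cpair_ge_snd[of "code_fm p" y] cpair_ge_snd[of "cpair y (code_fm p)" 6] by auto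
next
  case (Inf y p) then show ?case using cpair_ge_snd[of "code_fm p" y] cpair_ge_snd[of "cpair y (code_fm p)" 7] by auto
qed

lemma sent_codes_iff: "c \<in> sent_codes L \<longleftrightarrow> is_sent_code L c"
  unfolding is_sent_code_iff
proof
  assume "c \<in> sent_codes L"
  then obtain p where p: "c = code_fm p" "wf_fm L p" "fv_fm p = {}" unfolding sent_codes_def sentence_def by auto
  then show "wf_fm_code L c \<and> (\<forall>x\<le>c. fresh_fm_code L x c)" unfolding wf_fm_code_def fresh_fm_code_def by auto
next
  assume a: "wf_fm_code L c \<and> (\<forall>x\<le>c. fresh_fm_code L x c)"
  then obtain p where p: "code_fm p = c" "wf_fm L p" unfolding wf_fm_code_def by auto
  have "fv_fm p = {}"
  proof (rule ccontr)
    assume "fv_fm p \<noteq> {}"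
    then obtain x where x: "x \<in> fv_fm p" by auto
    then have "x \<le> c" using fv_fm_le p(1) by blast
    then obtain q where "code_fm q = c" "x \<notin> fv_fm q" using a unfolding fresh_fm_code_def by blast
    then show False using p(1) x code_fm_inj by blast
  qed
  then show "c \<in> sent_codes L" unfolding sent_codes_def sentence_def using p by auto
qed

section \<open>Values of sentences and dyadic constant sentences\<close>

lemma struct_parts:
  assumes "is_structure L M"
  shows "univ M \<noteq> {}"
    "\<forall>x\<in>univ M. \<forall>y\<in>univ M. 0 \<le> dst M x y \<and> dst M x y \<le> 1
        \<and> (dst M x y = 0 \<longleftrightarrow> x = y) \<and> dst M x y = dst M y x"
    "\<forall>c\<in>fsyms L. \<forall>xs. set xs \<subseteq> univ M \<and> length xs = farity L c \<longrightarrow> fint M c xs \<in> univ M"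
    "\<forall>r\<in>rsyms L. \<forall>xs. set xs \<subseteq> univ M \<and> length xs = rarity L r
        \<longrightarrow> 0 \<le> rint M r xs \<and> rint M r xs \<le> 1"
proof -
  note D = assms[unfolded is_structure_def]
  show "univ M \<noteq> {}" by (rule D[THEN conjunct1])
  show "\<forall>x\<in>univ M. \<forall>y\<in>univ M. 0 \<le> dst M x y \<and> dst M x y \<le> 1
        \<and> (dst M x y = 0 \<longleftrightarrow> x = y) \<and> dst M x y = dst M y x" by (rule D[THEN conjunct2, THEN conjunct1])
  show "\<forall>c\<in>fsyms L. \<forall>xs. set xs \<subseteq> univ M \<and> length xs = farity L c \<longrightarrow> fint M c xs \<in> univ M"
    by (rule D[THEN conjunct2, THEN conjunct2, THEN conjunct2, THEN conjunct2, THEN conjunct1])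
  show "\<forall>r\<in>rsyms L. \<forall>xs. set xs \<subseteq> univ M \<and> length xs = rarity L r
        \<longrightarrow> 0 \<le> rint M r xs \<and> rint M r xs \<le> 1"
    by (rule D[THEN conjunct2, THEN conjunct2, THEN conjunct2, THEN conjunct2, THEN conjunct2,
          THEN conjunct2, THEN conjunct1])
qed

lemma struct_univ: "is_structure L M \<Longrightarrow> univ M \<noteq> {}"
  by (rule struct_parts(1))

lemma struct_dst: "is_structure L M \<Longrightarrow> x \<in> univ M \<Longrightarrow> y \<in> univ M \<Longrightarrow> 0 \<le> dst M x y \<and> dst M x y \<le> 1"
  using struct_parts(2) by blast

lemma struct_fint: "is_structure L M \<Longrightarrow> c \<in> fsyms L \<Longrightarrow> set xs \<subseteq> univ M \<Longrightarrow> length xs = farity L c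
  \<Longrightarrow> fint M c xs \<in> univ M"
  using struct_parts(3) by blast

lemma struct_rint: "is_structure L M \<Longrightarrow> r \<in> rsyms L \<Longrightarrow> set xs \<subseteq> univ M \<Longrightarrow> length xs = rarity L r
  \<Longrightarrow> 0 \<le> rint M r xs \<and> rint M r xs \<le> 1"
  using struct_parts(4) by blast

lemma tval_in: "is_structure L M \<Longrightarrow> (\<forall>x. s x \<in> univ M) \<Longrightarrow> wf_trm L t \<Longrightarrow> tval M s t \<in> univ M"
proof (induction t)
  case (Var x) then show ?case by simp
next
  case (Fn c ts)
  have "set (map (tval M s) ts) \<subseteq> univ M" using Fn by auto
  then show ?case using struct_fint[OF Fn.prems(1)] Fn.prems by simp
qed

lemma fval_bounds: "is_structure L M \<Longrightarrow> (\<forall>x. s x \<in> univ M) \<Longrightarrow> wf_fm L p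
   \<Longrightarrow> 0 \<le> fval M s p \<and> fval M s p \<le> 1"
proof (induction p arbitrary: s)
  case (Rel r ts)
  have "set (map (tval M s) ts) \<subseteq> univ M" using tval_in[OF Rel.prems(1,2)] Rel.prems(3) by auto
  then show ?case using struct_rint[OF Rel.prems(1), of r "map (tval M s) ts"] Rel.prems(3) by simp
next
  case (Dist t u)
  then show ?case using struct_dst[OF Dist.prems(1)] tval_in[OF Dist.prems(1,2)] by simp
next
  case (Monus p q)
  have "0 \<le> fval M s p \<and> fval M s p \<le> 1" "0 \<le> fval M s q \<and> fval M s q \<le> 1"
    using Monus.IH[OF Monus.prems(1,2)] Monus.prems(3) by auto
  then show ?case by simp
next
  case (Sup x p)
  let ?g = "\<lambda>a. fval M (s(x := a)) p"
  have g: "\<And>a. a \<in> univ M \<Longrightarrow> 0 \<le> ?g a \<and> ?g a \<le> 1" using Sup by simp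
  obtain a0 where a0: "a0 \<in> univ M" using struct_univ[OF Sup.prems(1)] by blast
  have bdd: "bdd_above (?g ` univ M)" unfolding bdd_above_def using g by blast
  have "0 \<le> ?g a0" using g a0 by blast
  also have "?g a0 \<le> (SUP a\<in>univ M. ?g a)" by (rule cSUP_upper[OF a0 bdd])
  finally have "0 \<le> (SUP a\<in>univ M. ?g a)" .
  moreover have "(SUP a\<in>univ M. ?g a) \<le> 1" using g a0 by (intro cSUP_least) auto
  ultimately show ?case by simp
next
  case (Inf x p)
  let ?g = "\<lambda>a. fval M (s(x := a)) p"
  have g: "\<And>a. a \<in> univ M \<Longrightarrow> 0 \<le> ?g a \<and> ?g a \<le> 1" using Inf by simp
  obtain a0 where a0: "a0 \<in> univ M" using struct_univ[OF Inf.prems(1)] by blast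
  have bdd: "bdd_below (?g ` univ M)" unfolding bdd_below_def using g by blast
  have "(INF a\<in>univ M. ?g a) \<le> ?g a0" by (rule cINF_lower[OF bdd a0])
  also have "?g a0 \<le> 1" using g a0 by blast
  finally have "(INF a\<in>univ M. ?g a) \<le> 1" .
  moreover have "0 \<le> (INF a\<in>univ M. ?g a)" using g a0 by (intro cINF_greatest) auto
  ultimately show ?case by simp
next
  case (Half p)
  have "0 \<le> fval M s p \<and> fval M s p \<le> 1" using Half.prems by (intro Half.IH) simp_all
  then show ?case by simp
qed simp_all

lemma sval_bounds: "is_structure L M \<Longrightarrow> wf_fm L p \<Longrightarrow> 0 \<le> sval M p \<and> sval M p \<le> 1"
  unfolding sval_def
proof (rule fval_bounds)
  assume "is_structure L M"
  then have "\<exists>a. a \<in> univ M" using struct_univ by blast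
  then show "\<forall>x. (SOME a. a \<in> univ M) \<in> univ M" by (metis someI_ex)
qed

definition some_sentence :: fm where "some_sentence = Sup 0 (Dist (Var 0) (Var 0))"
definition one_fm :: fm where "one_fm = COne some_sentence"
definition zero_fm :: fm where "zero_fm = CZero some_sentence"
fun dyadic_unit_fm :: "nat \<Rightarrow> fm" where "dyadic_unit_fm 0 = one_fm" | "dyadic_unit_fm (Suc j) = Half (dyadic_unit_fm j)"
definition add_fm :: "fm \<Rightarrow> fm \<Rightarrow> fm" where "add_fm a b = Monus one_fm (Monus (Monus one_fm a) b)"
fun dyadic_fm :: "nat \<Rightarrow> nat \<Rightarrow> fm" where "dyadic_fm j 0 = zero_fm" | "dyadic_fm j (Suc i) = add_fm (dyadic_fm j i) (dyadic_unit_fm j)"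

lemma some_sentence_sent: "wf_fm L some_sentence" "fv_fm some_sentence = {}" by (auto simp: some_sentence_def)

lemma dyadic_unit_fm_sent: "wf_fm L (dyadic_unit_fm j)" "fv_fm (dyadic_unit_fm j) = {}"
  by (induction j) (auto simp: one_fm_def some_sentence_def)

lemma dyadic_fm_sent: "wf_fm L (dyadic_fm j i)" "fv_fm (dyadic_fm j i) = {}"
  by (induction i) (auto simp: zero_fm_def one_fm_def some_sentence_def add_fm_def dyadic_unit_fm_sent)

lemma dyadic_unit_fm_val: "fval M s (dyadic_unit_fm j) = 1 / 2^j"
proof (induction j)
  case 0 then show ?case by (simp add: one_fm_def)
next
  case (Suc j) then show ?case by simp
qed

lemma add_fm_val: "fval M s a = A \<Longrightarrow> fval M s b = B \<Longrightarrow> 0 \<le> A \<Longrightarrow> 0 \<le> B \<Longrightarrow> A + B \<le> 1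
  \<Longrightarrow> fval M s (add_fm a b) = A + B"
  unfolding add_fm_def one_fm_def by simp

lemma dyadic_fm_val: "i \<le> 2^j \<Longrightarrow> fval M s (dyadic_fm j i) = real i / 2^j"
proof (induction i)
  case 0 then show ?case by (simp add: zero_fm_def)
next
  case (Suc i)
  then have ih: "fval M s (dyadic_fm j i) = real i / 2^j" by simp
  have "real (Suc i) \<le> real (2^j)" using Suc.prems by (simp only: of_nat_le_iff)
  then have le0: "real (Suc i) \<le> 2^j" by simp
  have e: "real i / 2^j + 1 / 2^j = real (Suc i) / 2^j" by (simp add: add_divide_distrib)
  have le: "real i / 2^j + 1 / 2^j \<le> 1" unfolding e using le0 by simp
  show ?case unfolding dyadic_fm.simps e[symmetric]
    by (rule add_fm_val[OF ih dyadic_unit_fm_val]) (use le in simp_all)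
qed

lemma code_dyadic_fm_rec: "code_fm (dyadic_fm j (Suc i)) = cpair 5 (cpair (code_fm one_fm) (cpair 5 (cpair (cpair 5 (cpair (code_fm one_fm) (code_fm (dyadic_fm j i)))) (code_fm (dyadic_unit_fm j)))))"
  by (simp add: add_fm_def)

lemma rec_in_code_dyadic_unit_fm[rec_in_intros]: "rec_in f n a \<Longrightarrow> rec_in f n (\<lambda>xs. code_fm (dyadic_unit_fm (a xs)))"
proof -
  have "rec_in f 1 (\<lambda>xs. code_fm (dyadic_unit_fm (xs!0)))"
    by (rule rec_in_prim_rec1[where c="code_fm one_fm" and H="\<lambda>k r. cpair 4 r"]) (simp, simp, (intro rec_in_intros | simp)+)
  then show "rec_in f n a \<Longrightarrow> rec_in f n (\<lambda>xs. code_fm (dyadic_unit_fm (a xs)))" by (rule rec_in_comp1)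
qed

lemma rec_in_code_dyadic_fm[rec_in_intros]: "rec_in f n a \<Longrightarrow> rec_in f n b \<Longrightarrow> rec_in f n (\<lambda>xs. code_fm (dyadic_fm (a xs) (b xs)))"
proof -
  have "rec_in f 2 (\<lambda>xs. (\<lambda>i j. code_fm (dyadic_fm j i)) (xs!0) (xs!1))"
    by (rule rec_in_prim_rec2[where G="\<lambda>j. code_fm zero_fm" and
          H="\<lambda>k r j. cpair 5 (cpair (code_fm one_fm) (cpair 5 (cpair (cpair 5 (cpair (code_fm one_fm) r)) (code_fm (dyadic_unit_fm j)))))"])
       (simp, simp only: code_dyadic_fm_rec, (intro rec_in_intros | simp)+)
  from rec_in_swap[OF this] have "rec_in f 2 (\<lambda>xs. code_fm (dyadic_fm (xs!0) (xs!1)))" by simp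
  then show "rec_in f n a \<Longrightarrow> rec_in f n b \<Longrightarrow> rec_in f n (\<lambda>xs. code_fm (dyadic_fm (a xs) (b xs)))" by (rule rec_in_comp2)
qed

lemma sent_code_fm: "k \<in> sent_codes L \<Longrightarrow> code_fm (fm_of_code k) = k \<and> sentence L (fm_of_code k)"
  unfolding sent_codes_def by auto

lemma some_sentence_code: "code_fm some_sentence \<in> sent_codes L"
  unfolding sent_codes_def sentence_def using some_sentence_sent by blast

definition code_val :: "'a cstruct \<Rightarrow> nat \<Rightarrow> real" where
  "code_val M k = sval M (fm_of_code k)"

lemma code_val_bounds:
  "is_structure L M \<Longrightarrow> k \<in> sent_codes L \<Longrightarrow> 0 \<le> code_val M k \<and> code_val M k \<le> 1"
  unfolding code_val_def using sval_bounds sent_code_fm unfolding sentence_def by blast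

lemma sent_code_Monus:
  assumes "k \<in> sent_codes L" "l \<in> sent_codes L"
  shows "cpair 5 (cpair k l) \<in> sent_codes L"
    and "code_val M (cpair 5 (cpair k l)) = max (code_val M k - code_val M l) 0"
proof -
  obtain p q where p: "k = code_fm p" "sentence L p" and q: "l = code_fm q" "sentence L q"
    using assms unfolding sent_codes_def by blast
  have e: "cpair 5 (cpair k l) = code_fm (Monus p q)" using p q by simp
  have "sentence L (Monus p q)" using p q unfolding sentence_def by simp
  then show "cpair 5 (cpair k l) \<in> sent_codes L" unfolding e sent_codes_def by blast
  show "code_val M (cpair 5 (cpair k l)) = max (code_val M k - code_val M l) 0"
    using p(1) q(1) unfolding e code_val_def fm_of_code_code by (simp add: sval_def)
qed

lemma dyadic_sent_code: "code_fm (dyadic_fm j i) \<in> sent_codes L"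
  unfolding sent_codes_def sentence_def using dyadic_fm_sent by blast

lemma code_val_dyadic: "i \<le> 2^j \<Longrightarrow> code_val M (code_fm (dyadic_fm j i)) = real i / 2^j"
  by (simp add: code_val_def sval_def dyadic_fm_val)

section \<open>Codes of rationals and of rational intervals\<close>

lemma quotient_of_Fract_coprime: "r = Fract p q \<Longrightarrow> q > 0 \<Longrightarrow> coprime p q \<Longrightarrow> quotient_of r = (p, q)"
  unfolding quotient_of_def by (rule the1_equality[OF quotient_of_unique]) simp

lemma int_encode_nat: "int_encode (int a) = 2 * a"
  by (simp add: int_encode_def sum_encode_def)

lemma int_decode_even: "int_decode (2 * u) = int u"
  by (simp add: int_decode_def sum_decode_def)

lemma code_rat_pos:
  assumes "0 < e"
  shows "\<exists>a b. 0 < a \<and> 0 < b \<and> code_rat e = cpair (2*a) b \<and> (of_rat e :: real) = real a / real b"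
proof -
  obtain p q where pq: "quotient_of e = (p, q)" by (cases "quotient_of e")
  have q: "q > 0" using quotient_of_denom_pos[OF pq] .
  have e: "e = of_int p / of_int q" using quotient_of_div[OF pq] .
  have p: "p > 0" using assms q unfolding e by (simp add: zero_less_divide_iff)
  have "code_rat e = cpair (2 * nat p) (nat q)"
    unfolding code_rat_def pq cpair_def using p int_encode_nat[of "nat p"] by simp
  moreover have "(of_rat e :: real) = real (nat p) / real (nat q)"
    unfolding e using p q by (simp add: of_rat_divide)
  ultimately show ?thesis using p q by (intro exI[of _ "nat p"] exI[of _ "nat q"]) simp
qed

lemma code_rat_pow: "code_rat (1 / 2^n) = cpair 2 (2^n)"
proof -
  have "(1 / 2^n :: rat) = Fract 1 (2^n)" by (simp add: Fract_of_int_quotient)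
  then have "quotient_of (1 / 2^n) = (1, 2^n)" by (rule quotient_of_Fract_coprime) simp_all
  then show ?thesis unfolding code_rat_def cpair_def using int_encode_nat[of 1] by (simp add: nat_power_eq)
qed

lemma of_rat_pow: "(of_rat (1 / 2^n :: rat) :: real) = 1 / 2^n"
  by (simp add: of_rat_divide of_rat_power)

lemma decode_rat_even: "(of_rat (decode_rat (cpair (2*u) v)) :: real) = real u / real v"
  unfolding decode_rat_def cpair_def
  by (simp add: int_decode_even Fract_of_int_quotient of_rat_divide)

lemma lo_cpair: "lo (cpair (cpair (2*u) v) w) = real u / real v"
  unfolding lo_def using decode_rat_even by (simp add: cfst_def[symmetric] cpair_def[symmetric])

lemma hi_cpair: "hi (cpair w (cpair (2*u) v)) = real u / real v"
  unfolding hi_def using decode_rat_even by (simp add: csnd_def[symmetric] cpair_def[symmetric])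

lemma lo_nonpos: "lo m \<le> 0 \<longleftrightarrow> csnd (cfst m) = 0 \<or> cfst (cfst m) = 0 \<or> odd (cfst (cfst m))"
proof -
  define A where "A = cfst (cfst m)"
  define B where "B = csnd (cfst m)"
  have "lo m = real_of_int (int_decode A) / real B"
    unfolding lo_def decode_rat_def A_def B_def cfst_def csnd_def
    by (simp add: Fract_of_int_quotient of_rat_divide split: prod.split)
  moreover have "int_decode A \<le> 0 \<longleftrightarrow> A = 0 \<or> odd A"
    unfolding int_decode_def sum_decode_def by auto
  ultimately show ?thesis unfolding A_def[symmetric] B_def[symmetric]
    by (cases "B = 0") (auto simp: divide_nonpos_pos divide_le_0_iff)
qed

section \<open>From a computable theory to a \<open>\<Pi>\<^sub>1\<close> presentation\<close>

lemma theory_computable_approx: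
  assumes "computable_lang L" "theory_computable_in D L M"
  obtains f a where "f \<in> D" "rec_in f 2 (\<lambda>xs. a (xs!0) (xs!1))"
    "\<And>k n. k \<in> sent_codes L \<Longrightarrow> lo (a k n) \<le> code_val M k \<and> code_val M k \<le> hi (a k n)
       \<and> hi (a k n) - lo (a k n) < 1 / 2^n"
proof -
  obtain f p where fD: "f \<in> D" and P: "\<forall>k\<in>sent_codes L. \<forall>e::rat. 0 < e \<longrightarrow> (\<exists>m. reval f p [k, code_rat e] m
      \<and> hi m - lo m < of_rat e \<and> lo m \<le> code_val M k \<and> code_val M k \<le> hi m)"
    using assms(2) unfolding theory_computable_in_def code_val_def by blast
  \<comment> \<open>The program is only specified on sentences, so other inputs are redirected to a fixed one.\<close>
  define s where "s k = (if is_sent_code L k then k else code_fm some_sentence)" for k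
  have s: "s k \<in> sent_codes L" "k \<in> sent_codes L \<Longrightarrow> s k = k" for k
    unfolding s_def using some_sentence_code sent_codes_iff by auto
  define Q where "Q k n m \<longleftrightarrow> reval f p [s k, cpair 2 (2^n)] m \<and> hi m - lo m < 1 / 2^n
      \<and> lo m \<le> code_val M (s k) \<and> code_val M (s k) \<le> hi m" for k n m
  define a where "a k n = (SOME m. Q k n m)" for k n
  have a: "Q k n (a k n)" for k n
  proof -
    have "\<exists>m. reval f p [s k, code_rat (1 / 2^n)] m \<and> hi m - lo m < of_rat (1 / 2^n)
        \<and> lo m \<le> code_val M (s k) \<and> code_val M (s k) \<le> hi m"
      using P s(1) by simp
    then show ?thesis unfolding a_def Q_def code_rat_pow of_rat_pow by (rule someI_ex)
  qed
  have a_rec: "rec_in f 2 (\<lambda>xs. a (xs!0) (xs!1))"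
  proof (rule rec_in_run_prog[where a="\<lambda>xs. s (xs!0)" and b="\<lambda>xs. cpair 2 (2^(xs!1))" and p=p])
    show "rec_in f 2 (\<lambda>xs. s (xs!0))"
      unfolding s_def by (intro rec_in_if rec_in_is_sent_code[OF assms(1)] rec_in_intros; simp)
    show "rec_in f 2 (\<lambda>xs. cpair 2 (2^(xs!1)))" by (intro rec_in_intros; simp)
    show "reval f p [s (xs!0), cpair 2 (2^(xs!1))] (a (xs!0) (xs!1))" for xs
      using a unfolding Q_def by blast
  qed
  show thesis
  proof (rule that[OF fD a_rec])
    show "lo (a k n) \<le> code_val M k \<and> code_val M k \<le> hi (a k n) \<and> hi (a k n) - lo (a k n) < 1 / 2^n"
      if "k \<in> sent_codes L" for k n
      using a[of k n] s(2)[OF that] unfolding Q_def by simp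
  qed
qed

lemma le_zero_if_le_all_inverse_pow2: "(\<forall>n::nat. x \<le> 1 / 2^n) \<Longrightarrow> (x::real) \<le> 0"
proof (rule ccontr)
  assume a: "\<forall>n::nat. x \<le> 1 / 2^n" "\<not> x \<le> 0"
  obtain n where "1 / x < (2::real)^n" using real_arch_pow[of 2 "1/x"] by auto
  then have "1 / 2^n < x" using a(2) by (simp add: field_simps)
  then show False using a(1) by (meson not_le)
qed

lemma zero_iff_lower_approx_nonpos:
  fixes v :: real and l h :: "nat \<Rightarrow> real"
  assumes "0 \<le> v" and "\<And>n. l n \<le> v \<and> v \<le> h n \<and> h n - l n < 1 / 2^n"
  shows "v = 0 \<longleftrightarrow> (\<forall>n. l n \<le> 0)"
proof
  assume l: "\<forall>n. l n \<le> 0"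
  have "v \<le> 1 / 2^n" for n using assms(2)[of n] l[rule_format, of n] by linarith
  then show "v = 0" using le_zero_if_le_all_inverse_pow2 assms(1) by (metis order_antisym)
qed (use assms(2) in force)

lemma Pi1_theory_if_theory_computable:
  assumes L: "computable_lang L" and M: "is_structure L M" and "theory_computable_in D L M"
  shows "Pi1_in D (th_codes L M)"
proof -
  obtain f a where fD: "f \<in> D" and a_rec: "rec_in f 2 (\<lambda>xs. a (xs!0) (xs!1))"
    and a: "\<And>k n. k \<in> sent_codes L \<Longrightarrow> lo (a k n) \<le> code_val M k \<and> code_val M k \<le> hi (a k n)
       \<and> hi (a k n) - lo (a k n) < 1 / 2^n"
    using theory_computable_approx[OF L assms(3)] by blast
  define R where "R k n \<longleftrightarrow> is_sent_code L k \<and> lo (a k n) \<le> 0" for k n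
  have "rec_in f 2 (\<lambda>xs. ind (R (xs!0) (xs!1)))"
    unfolding R_def lo_nonpos
    by (intro rec_in_ind_conj rec_in_is_sent_code[OF L] rec_in_ind_disj rec_in_ind_eq
        rec_in_ind_not rec_in_ind_even rec_in_intros rec_in_comp2[OF a_rec]) simp_all
  then have "comp_in2 f (\<lambda>k n. if R k n then 1 else 0)"
    by (intro rec_in_to_comp_in2) (simp add: ind_def)
  moreover have "th_codes L M = {k. \<forall>n. R k n}"
    using zero_iff_lower_approx_nonpos[OF conjunct1[OF code_val_bounds[OF M]] a]
    unfolding th_codes_def R_def code_val_def sent_codes_iff by auto
  ultimately show ?thesis unfolding Pi1_in_def using fD by blast
qed

section \<open>From a \<open>\<Pi>\<^sub>1\<close> presentation to a computable theory\<close>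

lemma pow2_dominates: "0 < a \<Longrightarrow> \<exists>j. 2 * b < a * 2^j" for a b :: nat
proof -
  assume a: "0 < a"
  have "2 * b < 2^(2*b)" by (rule less_exp)
  also have "\<dots> \<le> a * 2^(2*b)" using a by simp
  finally show ?thesis by blast
qed

text \<open>On the code of \<open>e = a/b > 0\<close> this is the least \<open>j\<close> with \<open>2/2^j < e\<close>; the first disjunct
  only makes the search terminate on codes of other rationals.\<close>
definition precision :: "nat \<Rightarrow> nat" where
  "precision ec = (LEAST j. cfst ec div 2 = 0 \<or> 2 * csnd ec < (cfst ec div 2) * 2^j)"

lemma rec_in_precision[rec_in_intros]: "rec_in f n a \<Longrightarrow> rec_in f n (\<lambda>xs. precision (a xs))"
proof -
  have "rec_in f 1 (\<lambda>xs. precision (xs!0))"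
    unfolding precision_def
  proof (rule rec_in_Least1[where P="\<lambda>j x. cfst x div 2 = 0 \<or> 2 * csnd x < (cfst x div 2) * 2^j"])
    show "rec_in f 2 (\<lambda>xs. ind (\<not> (cfst (xs!1) div 2 = 0 \<or> 2 * csnd (xs!1) < (cfst (xs!1) div 2) * 2^(xs!0))))"
      by (intro rec_in_intros) simp_all
    show "\<exists>m. cfst x div 2 = 0 \<or> 2 * csnd x < (cfst x div 2) * 2^m" for x
      using pow2_dominates[of "cfst x div 2" "csnd x"] by (cases "cfst x div 2 = 0") auto
  qed
  then show "rec_in f n a \<Longrightarrow> rec_in f n (\<lambda>xs. precision (a xs))" by (rule rec_in_comp1)
qed

lemma precision_code_rat: "0 < e \<Longrightarrow> 2 / 2 ^ precision (code_rat e) < (of_rat e :: real)"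
proof -
  assume "0 < e"
  then obtain a b where ab: "0 < a" "0 < b" "code_rat e = cpair (2*a) b" "(of_rat e :: real) = real a / real b"
    using code_rat_pos by blast
  define j where "j = precision (code_rat e)"
  have "cfst (code_rat e) div 2 = 0 \<or> 2 * csnd (code_rat e) < (cfst (code_rat e) div 2) * 2^j"
    unfolding j_def precision_def by (rule LeastI_ex) (use pow2_dominates[OF ab(1), of b] ab in auto)
  then have "real (2 * b) < real (a * 2^j)" using ab by (simp only: of_nat_less_iff) simp
  then have "2 / 2^j < real a / real b" using ab by (simp add: field_simps)
  then show ?thesis using ab(4) unfolding j_def by simp
qed

context
  fixes L :: clang and M :: "'a cstruct" and f :: "nat \<Rightarrow> nat" and R :: "nat \<Rightarrow> nat \<Rightarrow> bool"
  assumes L: "computable_lang L" and M: "is_structure L M"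
    and R_rec: "rec_in f 2 (\<lambda>xs. ind (R (xs!0) (xs!1)))"
    and th_R: "th_codes L M = {k. \<forall>n. R k n}"
begin

lemma positive_iff_refuted: "k \<in> sent_codes L \<Longrightarrow> code_val M k \<noteq> 0 \<longleftrightarrow> (\<exists>n. \<not> R k n)"
  using th_R unfolding th_codes_def code_val_def by blast

definition upper_gap :: "nat \<Rightarrow> nat \<Rightarrow> nat \<Rightarrow> nat" where
  "upper_gap k i j = cpair 5 (cpair (code_fm (dyadic_fm j (Suc i))) k)"

definition lower_gap :: "nat \<Rightarrow> nat \<Rightarrow> nat \<Rightarrow> nat" where
  "lower_gap k i j = cpair 5 (cpair k (code_fm (dyadic_fm j (i - 1))))"

text \<open>A witness \<open>w\<close> codes an index \<open>i \<le> 2^j\<close> together with refutations of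
  \<open>(i+1)/2^j \<le> \<phi>\<close> and \<open>\<phi> \<le> (i-1)/2^j\<close>; hence \<open>\<phi>\<close> lies in \<open>[(i-1)/2^j, (i+1)/2^j]\<close>.\<close>
definition bracket :: "nat \<Rightarrow> nat \<Rightarrow> nat \<Rightarrow> bool" where
  "bracket w k j \<longleftrightarrow> \<not> is_sent_code L k \<or> (cfst w \<le> 2^j
      \<and> (cfst w = 2^j \<or> \<not> R (upper_gap k (cfst w) j) (cfst (csnd w)))
      \<and> (cfst w = 0 \<or> \<not> R (lower_gap k (cfst w) j) (csnd (csnd w))))"

lemma upper_gap_val:
  "k \<in> sent_codes L \<Longrightarrow> Suc i \<le> 2^j \<Longrightarrow>
    upper_gap k i j \<in> sent_codes L \<and> code_val M (upper_gap k i j) = max (real (Suc i) / 2^j - code_val M k) 0"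
  unfolding upper_gap_def using sent_code_Monus[OF dyadic_sent_code] code_val_dyadic by metis

lemma lower_gap_val:
  "k \<in> sent_codes L \<Longrightarrow> i - 1 \<le> 2^j \<Longrightarrow>
    lower_gap k i j \<in> sent_codes L \<and> code_val M (lower_gap k i j) = max (code_val M k - real (i - 1) / 2^j) 0"
  unfolding lower_gap_def using sent_code_Monus[OF _ dyadic_sent_code] code_val_dyadic by metis

lemma bracket_exists: "\<exists>w. bracket w k j"
proof (cases "is_sent_code L k")
  case True
  then have k: "k \<in> sent_codes L" using sent_codes_iff by blast
  define v where "v = code_val M k"
  have v: "0 \<le> v" "v \<le> 1" using code_val_bounds[OF M k] unfolding v_def by auto
  define i where "i = nat \<lfloor>v * 2^j\<rfloor>"
  have fl: "real i \<le> v * 2^j" "v * 2^j < real i + 1"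
    unfolding i_def using v by (simp_all add: of_nat_nat)
  have i: "i \<le> 2^j"
  proof -
    have "v * 2^j \<le> 2^j" using v by (simp add: mult_le_cancel_right1)
    then have "real i \<le> real (2^j)" using fl(1) by (simp only: of_nat_power of_nat_numeral)
    then show ?thesis by (simp only: of_nat_le_iff)
  qed
  obtain n1 where n1: "i = 2^j \<or> \<not> R (upper_gap k i j) n1"
  proof (cases "i = 2^j")
    case False
    then have "Suc i \<le> 2^j" using i by simp
    moreover have "v < real (Suc i) / 2^j" using fl(2) by (simp add: field_simps)
    ultimately show ?thesis using that upper_gap_val[OF k] positive_iff_refuted unfolding v_def by force
  qed (use that in blast)
  obtain n2 where n2: "i = 0 \<or> \<not> R (lower_gap k i j) n2"
  proof (cases "i = 0")
    case False
    then have "real (i - 1) / 2^j < v" using fl(1) by (simp add: field_simps of_nat_diff)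
    moreover have "i - 1 \<le> 2^j" using i by simp
    ultimately show ?thesis using that lower_gap_val[OF k] positive_iff_refuted unfolding v_def by force
  qed (use that in blast)
  have "bracket (cpair i (cpair n1 n2)) k j"
    unfolding bracket_def using i n1 n2 by simp
  then show ?thesis by blast
qed (auto simp: bracket_def)

lemma bracket_sound:
  assumes k: "k \<in> sent_codes L" and w: "bracket w k j"
  shows "real (cfst w - 1) / 2^j \<le> code_val M k \<and> code_val M k \<le> real (Suc (cfst w)) / 2^j"
proof -
  have i: "cfst w \<le> 2^j"
    and up: "cfst w = 2^j \<or> \<not> R (upper_gap k (cfst w) j) (cfst (csnd w))"
    and low: "cfst w = 0 \<or> \<not> R (lower_gap k (cfst w) j) (csnd (csnd w))"
    using w k sent_codes_iff unfolding bracket_def by auto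
  have v: "0 \<le> code_val M k" "code_val M k \<le> 1" using code_val_bounds[OF M k] by auto
  have "code_val M k \<le> real (Suc (cfst w)) / 2^j"
  proof (cases "cfst w = 2^j")
    case True
    then have "1 \<le> real (Suc (cfst w)) / 2^j" by (simp add: field_simps)
    then show ?thesis using v by linarith
  next
    case False
    then show ?thesis using upper_gap_val[OF k, of "cfst w" j] positive_iff_refuted up i
      by (fastforce simp: max_def split: if_splits)
  qed
  moreover have "real (cfst w - 1) / 2^j \<le> code_val M k"
  proof (cases "cfst w = 0")
    case False
    then show ?thesis using lower_gap_val[OF k, of "cfst w" j] positive_iff_refuted low i
      by (fastforce simp: max_def split: if_splits)
  qed (use v in simp)
  ultimately show ?thesis by blast
qed

lemma rec_in_bracket: "rec_in f 3 (\<lambda>xs. ind (\<not> bracket (xs!0) (xs!1) (precision (xs!2))))"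
proof -
  have R: "rec_in f n a \<Longrightarrow> rec_in f n b \<Longrightarrow> rec_in f n (\<lambda>xs. ind (R (a xs) (b xs)))" for n a b
    by (rule rec_in_comp2[OF R_rec])
  show ?thesis unfolding bracket_def upper_gap_def lower_gap_def
    by (intro rec_in_ind_not rec_in_ind_disj rec_in_ind_conj rec_in_is_sent_code[OF L] R rec_in_intros)
      simp_all
qed

lemma theory_computable_if_Pi1_presentation:
  assumes "f \<in> D" shows "theory_computable_in D L M"
proof -
  define i where "i k ec = cfst (LEAST w. bracket w k (precision ec))" for k ec
  define out where "out k ec = cpair (cpair (2 * (i k ec - 1)) (2 ^ precision ec))
      (cpair (2 * Suc (i k ec)) (2 ^ precision ec))" for k ec
  have "rec_in f 2 (\<lambda>xs. LEAST w. bracket w (xs!0) (precision (xs!1)))"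
    by (rule rec_in_Least2[OF rec_in_bracket bracket_exists])
  then have "rec_in f 2 (\<lambda>xs. i (xs!0) (xs!1))"
    unfolding i_def by (rule rec_in_cfst)
  then have i_rec: "rec_in f n a \<Longrightarrow> rec_in f n b \<Longrightarrow> rec_in f n (\<lambda>xs. i (a xs) (b xs))" for n a b
    by (rule rec_in_comp2)
  have "rec_in f 2 (\<lambda>xs. out (xs!0) (xs!1))"
    unfolding out_def by (intro rec_in_intros i_rec) simp_all
  then obtain p where p: "\<And>xs. length xs = 2 \<Longrightarrow> reval f p xs (out (xs!0) (xs!1))"
    unfolding rec_in_def by blast
  show ?thesis unfolding theory_computable_in_def
  proof (intro bexI[OF _ assms] exI[of _ p] ballI allI impI)
    fix k and e :: rat assume k: "k \<in> sent_codes L" and e: "0 < e"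
    define j where "j = precision (code_rat e)"
    define m where "m = out k (code_rat e)"
    have lo: "lo m = real (i k (code_rat e) - 1) / 2^j" and hi: "hi m = real (Suc (i k (code_rat e))) / 2^j"
      unfolding m_def out_def j_def by (simp_all only: lo_cpair hi_cpair of_nat_power of_nat_numeral)
    have "bracket (LEAST w. bracket w k j) k j" by (rule LeastI_ex) (rule bracket_exists)
    then have bounds: "lo m \<le> code_val M k \<and> code_val M k \<le> hi m"
      unfolding lo hi i_def j_def by (rule bracket_sound[OF k])
    have "hi m - lo m \<le> 2 / 2^j"
      unfolding lo hi by (simp add: diff_divide_distrib[symmetric] divide_right_mono)
    then have width: "hi m - lo m < of_rat e"
      using precision_code_rat[OF e] unfolding j_def by linarith
    have "reval f p [k, code_rat e] m" using p[of "[k, code_rat e]"] unfolding m_def by simp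
    with width bounds show "\<exists>m. reval f p [k, code_rat e] m \<and> hi m - lo m < of_rat e
        \<and> lo m \<le> sval M (fm_of_code k) \<and> sval M (fm_of_code k) \<le> hi m"
      unfolding code_val_def by (intro exI[of _ m]) simp
  qed
qed

end

lemma theory_computable_if_Pi1_theory:
  assumes "computable_lang L" "is_structure L M" "Pi1_in D (th_codes L M)"
  shows "theory_computable_in D L M"
proof -
  obtain f R where fD: "f \<in> D" and R: "comp_in2 f (\<lambda>k n. if R k n then 1 else 0)"
    and th: "th_codes L M = {k. \<forall>n. R k n}"
    using assms(3) unfolding Pi1_in_def by blast
  have "rec_in f 2 (\<lambda>xs. ind (R (xs!0) (xs!1)))"
    using rec_in_of_comp_in2[OF R] by (simp add: ind_def)
  then show ?thesis by (rule theory_computable_if_Pi1_presentation[OF assms(1,2) _ th fD])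
qed

theorem mainTheorem1:
  fixes L :: clang and M :: "'a cstruct" and D :: "(nat \<Rightarrow> nat) set"
  assumes "computable_lang L"
    and "is_structure L M"
    and "turing_degree D"
  shows "theory_computable_in D L M \<longleftrightarrow> Pi1_in D (th_codes L M)"
  using Pi1_theory_if_theory_computable[OF assms(1,2)] theory_computable_if_Pi1_theory[OF assms(1,2)]
  by blast

end
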